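(* Let $X$ be a real Hilbert space, let $B\colon X\rightrightarrows X$ be maximally $\beta$-monotone with $\beta\ge0$, and let $C\colon X\to X$ be $\sigma$-cocoercive. Let $\gamma\in\,]0,4\sigma[$, $\eta\in\,]0,2-\frac\gamma{2\sigma}[$, and $T_{\rm FB}:=(1-\eta)\mathrm{Id}+\eta J_{\gamma B}(\mathrm{Id}-\gamma C)$. Let $x_0\in X$ and $x_{n+1}:=T_{\rm FB}x_n$. Then: (i) For all $x,y\in X$, $$\|T_{\rm FB}x-T_{\rm FB}y\|^2\le\|x-y\|^2-\Big(\frac{4\sigma-\gamma}{2\eta\sigma}-1\Big)\|(\mathrm{Id}-T_{\rm FB})x-(\mathrm{Id}-T_{\rm FB})y\|^2-\frac{\gamma}{2\eta\sigma}\|(\mathrm{Id}-T_{\rm FB})x-(\mathrm{Id}-T_{\rm FB})y-2\eta\sigma(Cx-Cy)\|^2;$$ in particular $T_{\rm FB}$ is $\frac{2\eta\sigma}{4\sigma-\gamma}$-averaged. (ii) If $\operatorname{zer}(B+C)\neq\varnothing$, then $\|x_n-T_{\rm FB}x_n\|=o(1/\sqrt n)$, $(x_n)$ converges weakly to some $x^*\in\operatorname{zer}(B+C)$, $(Cx_n)$ converges strongly to $Cx^*$, and $C(\operatorname{zer}(B+C))=\{Cx^*\}$. If additionally $\beta>0$, then $(x_n)$ converges strongly to $x^*$ and $\operatorname{zer}(B+C)=\{x^*\}$.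
   Context: $J_B:=(\mathrm{Id}+B)^{-1}$; $\operatorname{zer}B:=\{x:0\in Bx\}$. $B$ is maximally $\beta$-monotone if $\langle x-y,u-v\rangle\ge\beta\|x-y\|^2$ for all $(x,u),(y,v)\in\operatorname{gra}B$ and no operator with this property has a graph properly containing $\operatorname{gra}B$. $C$ is $\sigma$-cocoercive if $\langle x-y,Cx-Cy\rangle\ge\sigma\|Cx-Cy\|^2$. $T$ is $\theta$-averaged ($\theta\in(0,1)$) if $T=(1-\theta)\mathrm{Id}+\theta N$ with $N$ nonexpansive. *)

theory Defs
  imports "HOL-Analysis.Analysis" "HOL-Library.Landau_Symbols"
begin

text \<open>Set-valued operators on X are modelled as functions 'a \<Rightarrow> 'a set;
  the graph of B is {(x,u). u \<in> B x}.\<close>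

definition beta_monotone :: "real \<Rightarrow> ('a::real_inner \<Rightarrow> 'a set) \<Rightarrow> bool" where
  "beta_monotone \<beta> B \<longleftrightarrow>
     (\<forall>x y u v. u \<in> B x \<longrightarrow> v \<in> B y \<longrightarrow> inner (x - y) (u - v) \<ge> \<beta> * (norm (x - y))^2)"

definition max_beta_monotone :: "real \<Rightarrow> ('a::real_inner \<Rightarrow> 'a set) \<Rightarrow> bool" where
  "max_beta_monotone \<beta> B \<longleftrightarrow> beta_monotone \<beta> B \<and>
     (\<forall>B'. beta_monotone \<beta> B' \<and> (\<forall>x. B x \<subseteq> B' x) \<longrightarrow> B' = B)"

definition cocoercive :: "real \<Rightarrow> ('a::real_inner \<Rightarrow> 'a) \<Rightarrow> bool" where
  "cocoercive \<sigma> C \<longleftrightarrow> (\<forall>x y. inner (x - y) (C x - C y) \<ge> \<sigma> * (norm (C x - C y))^2)"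

definition nonexpansive :: "('a::real_normed_vector \<Rightarrow> 'a) \<Rightarrow> bool" where
  "nonexpansive N \<longleftrightarrow> (\<forall>x y. norm (N x - N y) \<le> norm (x - y))"

definition averaged :: "real \<Rightarrow> ('a::real_normed_vector \<Rightarrow> 'a) \<Rightarrow> bool" where
  "averaged \<theta> T \<longleftrightarrow> 0 < \<theta> \<and> \<theta> < 1 \<and>
     (\<exists>N. nonexpansive N \<and> (\<forall>x. T x = (1 - \<theta>) *\<^sub>R x + \<theta> *\<^sub>R N x))"

text \<open>Scalar multiple \<gamma>B and resolvent J_{\<gamma>B} = (Id + \<gamma>B)^{-1}, as a relation and
  as a function (single-valued with full domain for maximally monotone B, by Minty).\<close>

definition op_scale :: "real \<Rightarrow> ('a::real_vector \<Rightarrow> 'a set) \<Rightarrow> 'a \<Rightarrow> 'a set" where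
  "op_scale \<gamma> B x = (\<lambda>u. \<gamma> *\<^sub>R u) ` B x"

definition resolvent :: "('a::real_vector \<Rightarrow> 'a set) \<Rightarrow> 'a \<Rightarrow> 'a" where
  "resolvent A x = (THE p. x \<in> (\<lambda>u. p + u) ` A p)"

definition op_sum :: "('a::real_vector \<Rightarrow> 'a set) \<Rightarrow> ('a \<Rightarrow> 'a) \<Rightarrow> 'a \<Rightarrow> 'a set" where
  "op_sum B C x = (\<lambda>u. u + C x) ` B x"

definition zer :: "('a::real_vector \<Rightarrow> 'a set) \<Rightarrow> 'a set" where
  "zer A = {x. 0 \<in> A x}"

definition weakly_converges :: "(nat \<Rightarrow> 'a::real_inner) \<Rightarrow> 'a \<Rightarrow> bool" where
  "weakly_converges x l \<longleftrightarrow> (\<forall>y. (\<lambda>n. inner (x n) y) \<longlonglongrightarrow> inner l y)"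

end

theory Submission
  imports Defs
begin

text \<open>
  Write \<open>J = J\<^sub>\<gamma>\<^sub>B\<close> and \<open>T = T\<^sub>F\<^sub>B\<close>. For \<open>p = J(u - \<gamma>Cu)\<close>, \<open>q = J(v - \<gamma>Cv)\<close> the vector
  \<open>(u - v) - \<gamma>(Cu - Cv) - (p - q)\<close> is \<open>\<gamma>\<close> times a difference of elements of \<open>Bp\<close> and \<open>Bq\<close>, so
  \<open>\<beta>\<close>-monotonicity of \<open>B\<close> and cocoercivity of \<open>C\<close> bound two inner products; expanding
  \<open>\<parallel>Tu - Tv\<parallel>\<^sup>2\<close> with \<open>Tu - Tv = (u - v) - \<eta>((u - v) - (p - q))\<close> gives (i), with a spare term
  \<open>2\<eta>\<gamma>\<beta>\<parallel>p - q\<parallel>\<^sup>2\<close>, and (i) says that \<open>T\<close> is averaged.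

  The fixed points of \<open>T\<close> are the zeros of \<open>B + C\<close>. With \<open>v\<close> a fixed point, (i) makes
  \<open>\<parallel>x\<^sub>n - v\<parallel>\<^sup>2\<close> decrease by summable amounts; this gives the rate for the nonincreasing residuals,
  \<open>Cx\<^sub>n \<rightarrow> Cx\<^sup>*\<close>, and strong convergence when \<open>\<beta> > 0\<close>. With \<open>u\<close> and \<open>v\<close> both fixed, (i) shows
  that \<open>C\<close> is constant on the fixed points, which coincide when \<open>\<beta> > 0\<close>.

  Weak convergence is obtained without weak compactness: bounded closed convex sets in a Hilbert
  space have the finite intersection property (by a minimal-norm argument), so the closed convex
  hulls of the tails of \<open>(x\<^sub>n)\<close> have common points. Such a point is fixed by \<open>T\<close> because
  \<open>x\<^sub>n - Tx\<^sub>n \<rightarrow> 0\<close>, it is unique by Opial's argument, and uniqueness forces weak convergence.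
  The same intersection property, together with Kirszbraun's extension lemma for finitely many
  points, proves Minty's theorem, which makes the resolvent \<open>J\<close> well defined.
\<close>

section \<open>Minimal-norm points and intersections of closed convex sets\<close>

lemma power2_norm_add:
  fixes u v :: "'a::real_inner"
  shows "(norm (u + v))^2 = (norm u)^2 + 2 * inner u v + (norm v)^2"
  by (simp add: power2_norm_eq_inner inner_add inner_commute)

lemma power2_norm_diff:
  fixes u v :: "'a::real_inner"
  shows "(norm (u - v))^2 = (norm u)^2 - 2 * inner u v + (norm v)^2"
  by (simp add: power2_norm_eq_inner inner_diff inner_commute)

lemma norm_diff_sq_midpoint:
  fixes q m :: "'a::real_inner"
  shows "(norm (q - m))^2 = 2 * (norm q)^2 + 2 * (norm m)^2 - 4 * (norm ((1/2) *\<^sub>R (q + m)))^2"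
  by (simp add: power2_norm_eq_inner inner_diff inner_add algebra_simps inner_commute)

lemma convex_dist_sq_le_norm_bound:
  fixes S :: "'a::real_inner set"
  assumes "convex S" "m \<in> S" "q \<in> S" "\<And>s. s \<in> S \<Longrightarrow> d \<le> norm s" "0 \<le> d"
  shows "(norm (q - m))^2 \<le> 2 * (norm q)^2 + 2 * (norm m)^2 - 4 * d^2"
proof -
  have "(1/2) *\<^sub>R (q + m) \<in> S"
    using convexD[OF assms(1,3,2), of "1/2" "1/2"] by (simp add: scaleR_add_right)
  then have "d \<le> norm ((1/2) *\<^sub>R (q + m))" by (rule assms(4))
  then have "d^2 \<le> (norm ((1/2) *\<^sub>R (q + m)))^2" using assms(5) by (rule power_mono)
  then show ?thesis using norm_diff_sq_midpoint[of q m] by linarith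
qed

lemma min_norm_point_dist_sq_le:
  fixes K :: "'a::real_inner set"
  assumes "convex K" "m \<in> K" "\<And>s. s \<in> K \<Longrightarrow> norm m \<le> norm s"
    and "q \<in> K" "norm q \<le> D" "D - \<epsilon> < norm m"
  shows "(norm (q - m))^2 \<le> 4 * D * \<epsilon>"
proof -
  have m_le: "norm m \<le> D" using assms(3)[OF assms(4)] assms(5) by linarith
  have "(norm (q - m))^2 \<le> 2 * (norm q)^2 + 2 * (norm m)^2 - 4 * (norm m)^2"
    using convex_dist_sq_le_norm_bound[OF assms(1,2,4) assms(3)] by simp
  also have "\<dots> \<le> 2 * ((D - norm m) * (D + norm m))"
    using power_mono[OF assms(5) norm_ge_zero, of 2] by (simp add: power2_eq_square algebra_simps)
  also have "\<dots> \<le> 2 * (\<epsilon> * (2 * D))"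
  proof -
    have "0 \<le> D + norm m" using m_le norm_ge_zero[of m] by linarith
    then show ?thesis using assms(6) m_le by (intro mult_left_mono mult_mono) auto
  qed
  finally show ?thesis by (simp add: mult_ac)
qed

lemma Cauchy_if_dist_sq_bound:
  fixes X :: "nat \<Rightarrow> 'a::real_normed_vector"
  assumes "\<And>M m n. M \<le> m \<Longrightarrow> M \<le> n \<Longrightarrow> (norm (X m - X n))^2 \<le> b M" "b \<longlonglongrightarrow> 0"
  shows "Cauchy X"
proof (rule CauchyI)
  fix e :: real assume e: "0 < e"
  then have "\<forall>\<^sub>F M in sequentially. b M < e^2"
    using assms(2) by (intro order_tendstoD(2)) auto
  then obtain M where "b M < e^2" by (auto simp: eventually_sequentially)
  then have "norm (X m - X n) < e" if "m \<ge> M" "n \<ge> M" for m n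
    using assms(1)[OF that] e by (smt (verit) power_less_imp_less_base)
  then show "\<exists>M. \<forall>m\<ge>M. \<forall>n\<ge>M. norm (X m - X n) < e" by blast
qed

lemma closed_convex_min_norm_exists:
  fixes S :: "'a::{real_inner,complete_space} set"
  assumes "closed S" "convex S" "S \<noteq> {}"
  shows "\<exists>m\<in>S. \<forall>s\<in>S. norm m \<le> norm s"
proof -
  define d where "d = Inf (norm ` S)"
  have bdd: "bdd_below (norm ` S)" by (rule bdd_belowI[of _ 0]) auto
  have d_le: "d \<le> norm s" if "s \<in> S" for s
    unfolding d_def using bdd that by (simp add: cInf_lower)
  have d0: "0 \<le> d" unfolding d_def using assms(3) by (auto intro!: cInf_greatest)
  have inv_Suc: "(\<lambda>n. 1 / real (Suc n)) \<longlonglongrightarrow> 0"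
    using LIMSEQ_inverse_real_of_nat by (simp add: inverse_eq_divide)
  have "\<exists>s\<in>S. norm s < d + 1 / Suc n" for n
  proof -
    have "Inf (norm ` S) < d + 1 / Suc n" unfolding d_def by simp
    then show ?thesis using assms(3) bdd by (subst (asm) cInf_less_iff) auto
  qed
  then obtain s where s: "\<And>n. s n \<in> S" "\<And>n. norm (s n) < d + 1 / Suc n" by metis
  have "Cauchy s"
  proof (rule Cauchy_if_dist_sq_bound)
    fix M m n :: nat assume "M \<le> m" "M \<le> n"
    moreover have "1 / Suc k \<le> 1 / Suc M" if "M \<le> k" for k :: nat
      using that by (simp add: frac_le)
    ultimately have "norm (s k) \<le> d + 1 / Suc M" if "k \<in> {m, n}" for k
      using s(2)[of k] that by force
    then have sq: "(norm (s k))^2 \<le> (d + 1 / Suc M)^2" if "k \<in> {m, n}" for k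
      using that by (intro power_mono) auto
    have "(norm (s m - s n))^2 \<le> 2 * (norm (s m))^2 + 2 * (norm (s n))^2 - 4 * d^2"
      by (rule convex_dist_sq_le_norm_bound[OF assms(2) s(1) s(1)]) (auto intro: d_le d0)
    with sq[of m] sq[of n] show "(norm (s m - s n))^2 \<le> 4 * (d + 1 / Suc M)^2 - 4 * d^2"
      by simp
  next
    have "(\<lambda>M. 4 * (d + 1 / Suc M)^2 - 4 * d^2) \<longlonglongrightarrow> 4 * (d + 0)^2 - 4 * d^2"
      by (intro tendsto_intros inv_Suc)
    then show "(\<lambda>M. 4 * (d + 1 / Suc M)^2 - 4 * d^2) \<longlonglongrightarrow> 0" by simp
  qed
  then obtain m where lim: "s \<longlonglongrightarrow> m" using Cauchy_convergent_iff convergent_def by blast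
  have "m \<in> S" using closed_sequentially[OF assms(1)] s(1) lim by blast
  moreover have "norm m \<le> d"
  proof (rule tendsto_le[OF sequentially_bot])
    show "(\<lambda>n. norm (s n)) \<longlonglongrightarrow> norm m" using lim by (rule tendsto_norm)
    show "(\<lambda>n. d + 1 / Suc n) \<longlonglongrightarrow> d"
      using tendsto_add[OF tendsto_const inv_Suc, of d] by simp
    show "\<forall>\<^sub>F n in sequentially. norm (s n) \<le> d + 1 / Suc n" using s(2) by (simp add: less_imp_le)
  qed
  ultimately show ?thesis using d_le by force
qed

lemma Int_closed_chain_near_Sup:
  fixes f :: "'a set \<Rightarrow> real"
  assumes "\<S> \<noteq> {}" "bdd_above (f ` \<S>)"
    and Int: "\<And>S S'. S \<in> \<S> \<Longrightarrow> S' \<in> \<S> \<Longrightarrow> S \<inter> S' \<in> \<S>"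
    and anti: "\<And>S S'. S \<in> \<S> \<Longrightarrow> S' \<in> \<S> \<Longrightarrow> S \<subseteq> S' \<Longrightarrow> f S' \<le> f S"
  obtains K where "\<And>n. K n \<in> \<S>" "\<And>m n. m \<le> n \<Longrightarrow> K n \<subseteq> K m"
    "\<And>n. (SUP S\<in>\<S>. f S) - 1 / Suc n < f (K n)"
proof -
  have "\<exists>S\<in>\<S>. (SUP S\<in>\<S>. f S) - 1 / Suc n < f S" for n
  proof -
    have "(SUP S\<in>\<S>. f S) - 1 / Suc n < (SUP S\<in>\<S>. f S)" by simp
    then show ?thesis using assms(1,2) by (simp add: less_cSUP_iff)
  qed
  then obtain S where S: "\<And>n. S n \<in> \<S>" "\<And>n. (SUP S\<in>\<S>. f S) - 1 / Suc n < f (S n)" by metis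
  define K where "K n = \<Inter>(S ` {..n})" for n
  have K: "K n \<in> \<S>" for n
  proof (induction n)
    case (Suc n)
    have "K (Suc n) = K n \<inter> S (Suc n)" unfolding K_def by (auto simp: atMost_Suc)
    then show ?case using Int Suc S(1) by simp
  qed (simp add: K_def S(1))
  moreover have "K n \<subseteq> K m" if "m \<le> n" for m n
    unfolding K_def using that by auto
  moreover have "(SUP S\<in>\<S>. f S) - 1 / Suc n < f (K n)" for n
    using S(2)[of n] anti[OF K S(1), of n] unfolding K_def by fastforce
  ultimately show ?thesis using that by blast
qed

lemma Cauchy_min_norm_chain:
  fixes K :: "nat \<Rightarrow> 'a::real_inner set"
  assumes "\<And>n. convex (K n)" "\<And>m n. m \<le> n \<Longrightarrow> K n \<subseteq> K m"
    and "\<And>n. p n \<in> K n" "\<And>n s. s \<in> K n \<Longrightarrow> norm (p n) \<le> norm s"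
    and "\<And>n. norm (p n) \<le> D" "\<And>n. D - 1 / Suc n < norm (p n)"
  shows "Cauchy p"
proof (rule Cauchy_if_dist_sq_bound)
  have D0: "0 \<le> D" using assms(5)[of 0] norm_ge_zero order_trans by blast
  have ordered: "(norm (p n - p m))^2 \<le> 4 * D / Suc M" if "M \<le> m" "m \<le> n" for M m n
  proof -
    have "(norm (p n - p m))^2 \<le> 4 * D * (1 / Suc m)"
      using assms(2)[OF that(2)] assms(3)[of n] assms(5)[of n] assms(6)[of m]
      by (intro min_norm_point_dist_sq_le[OF assms(1,3,4)]) auto
    also have "\<dots> \<le> 4 * D / Suc M" using that(1) D0 by (simp add: divide_left_mono)
    finally show ?thesis .
  qed
  then show "(norm (p m - p n))^2 \<le> 4 * D / Suc M" if "M \<le> m" "M \<le> n" for M m n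
    using ordered[of M m n] ordered[of M n m] that by (metis nat_le_linear norm_minus_commute)
  show "(\<lambda>n. 4 * D / Suc n) \<longlonglongrightarrow> 0"
    using tendsto_mult[OF tendsto_const LIMSEQ_inverse_real_of_nat, of "4 * D"]
    by (simp add: inverse_eq_divide)
qed

lemma closed_convex_directed_Inter_nonempty:
  fixes \<S> :: "'a::{real_inner,complete_space} set set"
  assumes "\<S> \<noteq> {}" and closed_convex: "\<And>S. S \<in> \<S> \<Longrightarrow> closed S \<and> convex S \<and> S \<noteq> {}"
    and Int: "\<And>S S'. S \<in> \<S> \<Longrightarrow> S' \<in> \<S> \<Longrightarrow> S \<inter> S' \<in> \<S>" and "bounded (\<Union>\<S>)"
  shows "\<Inter>\<S> \<noteq> {}"
proof -
  obtain mn where mn: "\<And>S. S \<in> \<S> \<Longrightarrow> mn S \<in> S \<and> (\<forall>s\<in>S. norm (mn S) \<le> norm s)"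
    using closed_convex_min_norm_exists closed_convex by metis
  obtain R where R: "\<And>S s. S \<in> \<S> \<Longrightarrow> s \<in> S \<Longrightarrow> norm s \<le> R"
    using \<open>bounded (\<Union>\<S>)\<close> bounded_iff by (metis UnionI)
  define D where "D = (SUP S\<in>\<S>. norm (mn S))"
  have bdd: "bdd_above ((\<lambda>S. norm (mn S)) ` \<S>)"
    using R mn by (intro bdd_aboveI[of _ R]) blast
  have le_D: "norm (mn S) \<le> D" if "S \<in> \<S>" for S
    unfolding D_def using that bdd by (rule cSUP_upper)
  obtain K where K: "\<And>n. K n \<in> \<S>" and K_anti: "\<And>m n. m \<le> n \<Longrightarrow> K n \<subseteq> K m"
    and near: "\<And>n. D - 1 / Suc n < norm (mn (K n))"
    using Int_closed_chain_near_Sup[OF \<open>\<S> \<noteq> {}\<close> bdd Int] mn unfolding D_def by (metis subsetD)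
  have close: "(norm (q - mn (K n)))^2 \<le> 4 * D / Suc n" if "q \<in> K n" "norm q \<le> D" for q n
    using min_norm_point_dist_sq_le[of "K n" "mn (K n)" q D "1 / Suc n"] closed_convex[OF K] mn[OF K]
      that near[of n] by simp
  have lim0: "(\<lambda>n. 4 * D / Suc n) \<longlonglongrightarrow> 0"
    using tendsto_mult[OF tendsto_const LIMSEQ_inverse_real_of_nat, of "4 * D"]
    by (simp add: inverse_eq_divide)
  have "Cauchy (\<lambda>n. mn (K n))"
    by (rule Cauchy_min_norm_chain[of K "\<lambda>n. mn (K n)" D])
      (use closed_convex[OF K] K_anti mn[OF K] le_D[OF K] near in auto)
  then obtain P where P: "(\<lambda>n. mn (K n)) \<longlonglongrightarrow> P" using Cauchy_convergent_iff convergent_def by blast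
  have "P \<in> S'" if S': "S' \<in> \<S>" for S'
  proof -
    define q where "q n = mn (S' \<inter> K n)" for n
    have q: "q n \<in> S'" "q n \<in> K n" "norm (q n) \<le> D" for n
      using mn[OF Int[OF S' K]] le_D[OF Int[OF S' K]] unfolding q_def by auto
    have "(\<lambda>n. q n - mn (K n)) \<longlonglongrightarrow> 0"
    proof (rule Lim_null_comparison)
      show "\<forall>\<^sub>F n in sequentially. norm (q n - mn (K n)) \<le> sqrt (4 * D / Suc n)"
        using close[OF q(2,3)] by (intro always_eventually allI real_le_rsqrt) auto
      show "(\<lambda>n. sqrt (4 * D / Suc n)) \<longlonglongrightarrow> 0" using tendsto_real_sqrt[OF lim0] by simp
    qed
    then have "q \<longlonglongrightarrow> P" using tendsto_add[OF _ P] by fastforce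
    then show ?thesis using closed_sequentially[of S'] closed_convex[OF S'] q(1) by blast
  qed
  then show ?thesis using \<open>\<S> \<noteq> {}\<close> by blast
qed

lemma bounded_closed_convex_fip:
  fixes \<F> :: "'a::{real_inner,complete_space} set set"
  assumes "\<And>S. S \<in> \<F> \<Longrightarrow> closed S \<and> convex S \<and> bounded S"
    and "\<And>\<G>. \<G> \<subseteq> \<F> \<Longrightarrow> finite \<G> \<Longrightarrow> \<G> \<noteq> {} \<Longrightarrow> \<Inter>\<G> \<noteq> {}"
  shows "\<Inter>\<F> \<noteq> {}"
proof (cases "\<F> = {}")
  case False
  then obtain F0 where F0: "F0 \<in> \<F>" by blast
  define \<S> where "\<S> = (\<lambda>\<G>. \<Inter>(insert F0 \<G>)) ` {\<G>. \<G> \<subseteq> \<F> \<and> finite \<G>}"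
  have "\<Inter>\<S> \<noteq> {}"
  proof (rule closed_convex_directed_Inter_nonempty)
    show "\<S> \<noteq> {}" unfolding \<S>_def by blast
    show "closed S \<and> convex S \<and> S \<noteq> {}" if "S \<in> \<S>" for S
    proof -
      obtain \<G> where \<G>: "S = \<Inter>(insert F0 \<G>)" "insert F0 \<G> \<subseteq> \<F>" "finite (insert F0 \<G>)"
        using \<open>S \<in> \<S>\<close> F0 unfolding \<S>_def by blast
      then show ?thesis
        using assms(1) assms(2)[OF \<G>(2,3)] by (metis closed_Inter convex_Inter insert_not_empty subsetD)
    qed
    show "S \<inter> S' \<in> \<S>" if SS': "S \<in> \<S>" "S' \<in> \<S>" for S S'
    proof -
      obtain \<G> \<G>' where "S = \<Inter>(insert F0 \<G>)" "S' = \<Inter>(insert F0 \<G>')"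
        "\<G> \<union> \<G>' \<subseteq> \<F>" "finite (\<G> \<union> \<G>')"
        using SS' unfolding \<S>_def by blast
      then have "S \<inter> S' = \<Inter>(insert F0 (\<G> \<union> \<G>'))" "\<G> \<union> \<G>' \<in> {\<G>. \<G> \<subseteq> \<F> \<and> finite \<G>}"
        by auto
      then show ?thesis unfolding \<S>_def by blast
    qed
    show "bounded (\<Union>\<S>)"
      using assms(1)[OF F0] by (rule bounded_subset[OF conjunct2[OF conjunct2]]) (auto simp: \<S>_def)
  qed
  moreover have "\<Inter>\<S> \<subseteq> \<Inter>\<F>" unfolding \<S>_def by blast
  ultimately show ?thesis by blast
qed simp

section \<open>Kirszbraun's lemma and Minty's theorem\<close>

lemma weighted_pairwise_sq_dist:
  fixes f :: "'b \<Rightarrow> 'a::real_inner"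
  assumes "finite V" "sum \<mu> V = 1"
  shows "(\<Sum>v\<in>V. \<Sum>w\<in>V. \<mu> v * \<mu> w * (norm (f v - f w))^2)
       = 2 * (\<Sum>v\<in>V. \<mu> v * (norm (f v - z))^2) - 2 * (norm (\<Sum>v\<in>V. \<mu> v *\<^sub>R (f v - z)))^2"
proof -
  define a where "a v = f v - z" for v
  have e: "(norm (f v - f w))^2 = (norm (a v))^2 + (norm (a w))^2 - 2 * inner (a v) (a w)" for v w
    unfolding a_def by (simp add: power2_norm_eq_inner inner_diff inner_commute)
  have "(\<Sum>v\<in>V. \<Sum>w\<in>V. \<mu> v * \<mu> w * (norm (f v - f w))^2)
      = (\<Sum>v\<in>V. \<Sum>w\<in>V. \<mu> v * \<mu> w * (norm (a v))^2 + \<mu> v * \<mu> w * (norm (a w))^2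
          - 2 * (\<mu> v * \<mu> w * inner (a v) (a w)))"
    by (simp only: e) (simp add: algebra_simps)
  also have "\<dots> = (\<Sum>v\<in>V. \<Sum>w\<in>V. \<mu> v * \<mu> w * (norm (a v))^2) + (\<Sum>v\<in>V. \<Sum>w\<in>V. \<mu> v * \<mu> w * (norm (a w))^2)
        - 2 * (\<Sum>v\<in>V. \<Sum>w\<in>V. \<mu> v * \<mu> w * inner (a v) (a w))"
    by (simp add: algebra_simps sum.distrib sum_subtractf sum_distrib_left)
  also have "(\<Sum>v\<in>V. \<Sum>w\<in>V. \<mu> v * \<mu> w * (norm (a v))^2) = (\<Sum>v\<in>V. \<mu> v * (norm (a v))^2)"
    using assms(2) by (simp add: sum_distrib_left[symmetric] sum_distrib_right[symmetric] mult.commute)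
  also have "(\<Sum>v\<in>V. \<Sum>w\<in>V. \<mu> v * \<mu> w * (norm (a w))^2) = (\<Sum>w\<in>V. \<mu> w * (norm (a w))^2)"
    using assms(2) by (simp add: sum_distrib_right[symmetric] sum_distrib_left[symmetric] mult.assoc)
  also have "(\<Sum>v\<in>V. \<Sum>w\<in>V. \<mu> v * \<mu> w * inner (a v) (a w)) = (norm (\<Sum>v\<in>V. \<mu> v *\<^sub>R a v))^2"
    by (simp add: power2_norm_eq_inner inner_sum_left inner_sum_right sum_distrib_left mult.assoc)
      (simp add: inner_commute)
  finally show ?thesis by (simp add: a_def)
qed

lemma kirszbraun_active_set_le:
  fixes c r :: "'i \<Rightarrow> 'a::real_inner"
  assumes "finite I"
    and lip: "\<And>i j. i \<in> I \<Longrightarrow> j \<in> I \<Longrightarrow> norm (c i - c j) \<le> norm (r i - r j)"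
    and "y \<in> convex hull (c ` I)"
    and active: "\<And>i. i \<in> I \<Longrightarrow> (norm (y - c i))^2 - (norm (z - r i))^2 = m"
  shows "m \<le> 0"
proof -
  define V where "V = c ` I"
  have V: "finite V" unfolding V_def using \<open>finite I\<close> by simp
  obtain \<mu> where \<mu>: "\<forall>v\<in>V. 0 \<le> \<mu> v" "sum \<mu> V = 1" "(\<Sum>v\<in>V. \<mu> v *\<^sub>R v) = y"
    using \<open>y \<in> convex hull (c ` I)\<close> convex_hull_finite[OF V] unfolding V_def by auto
  have "\<forall>v\<in>V. \<exists>i. i \<in> I \<and> c i = v" unfolding V_def by blast
  then obtain ii where ii: "\<And>v. v \<in> V \<Longrightarrow> ii v \<in> I \<and> c (ii v) = v" by metis
  define \<rho> where "\<rho> v = (norm (z - r (ii v)))^2" for v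
  have "(\<Sum>v\<in>V. \<mu> v *\<^sub>R (v - y)) = 0"
    using \<mu> by (simp add: scaleR_diff_right sum_subtractf scaleR_sum_left[symmetric])
  then have "(\<Sum>v\<in>V. \<Sum>w\<in>V. \<mu> v * \<mu> w * (norm (v - w))^2) = 2 * (\<Sum>v\<in>V. \<mu> v * (norm (v - y))^2)"
    using weighted_pairwise_sq_dist[OF V \<mu>(2), of "\<lambda>v. v" y] by simp
  also have "\<dots> = 2 * (\<Sum>v\<in>V. \<mu> v * \<rho> v) + 2 * m"
  proof -
    have "(norm (v - y))^2 = \<rho> v + m" if "v \<in> V" for v
      using active[of "ii v"] ii[OF that] unfolding \<rho>_def by (simp add: norm_minus_commute)
    then show ?thesis
      using \<mu>(2) by (simp add: algebra_simps sum.distrib sum_distrib_left[symmetric])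
  qed
  finally have pairwise: "(\<Sum>v\<in>V. \<Sum>w\<in>V. \<mu> v * \<mu> w * (norm (v - w))^2) = 2 * (\<Sum>v\<in>V. \<mu> v * \<rho> v) + 2 * m" .
  have "(\<Sum>v\<in>V. \<Sum>w\<in>V. \<mu> v * \<mu> w * (norm (v - w))^2)
      \<le> (\<Sum>v\<in>V. \<Sum>w\<in>V. \<mu> v * \<mu> w * (norm (r (ii v) - r (ii w)))^2)"
  proof (intro sum_mono mult_left_mono)
    fix v w assume "v \<in> V" "w \<in> V"
    then have "norm (v - w) \<le> norm (r (ii v) - r (ii w))"
      using lip[of "ii v" "ii w"] ii by simp
    then show "(norm (v - w))^2 \<le> (norm (r (ii v) - r (ii w)))^2"
      by (simp add: power_mono)
    show "0 \<le> \<mu> v * \<mu> w" using \<mu>(1) \<open>v \<in> V\<close> \<open>w \<in> V\<close> by simp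
  qed
  also have "\<dots> \<le> 2 * (\<Sum>v\<in>V. \<mu> v * \<rho> v)"
    using weighted_pairwise_sq_dist[OF V \<mu>(2), of "\<lambda>v. r (ii v)" z]
    unfolding \<rho>_def by (simp add: norm_minus_commute)
  finally show ?thesis using pairwise by simp
qed

lemma sq_dist_along_segment_to_nearest:
  fixes y q k :: "'a::real_inner"
  assumes "inner (y - q) (k - q) \<le> 0" "0 \<le> t"
  shows "(norm (y + t *\<^sub>R (q - y) - k))^2 \<le> (norm (y - k))^2 - (2 * t - t^2) * (norm (q - y))^2"
proof -
  have "inner (y - k) (q - y) = inner (y - q) (k - q) - (norm (q - y))^2"
    by (simp add: power2_norm_eq_inner inner_diff inner_commute algebra_simps)
  then have ip: "inner (y - k) (q - y) \<le> - ((norm (q - y))^2)" using assms(1) by simp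
  have "2 * t * inner (y - k) (q - y) \<le> - (2 * t * ((norm (q - y))^2))"
    using mult_left_mono[OF ip, of "2 * t"] assms(2) by simp
  moreover have "(norm (y + t *\<^sub>R (q - y) - k))^2
      = (norm (y - k))^2 + 2 * t * inner (y - k) (q - y) + t^2 * (norm (q - y))^2"
  proof -
    have e: "y + t *\<^sub>R (q - y) - k = (y - k) + t *\<^sub>R (q - y)" by simp
    show ?thesis unfolding e power2_norm_add by (simp add: power_mult_distrib)
  qed
  ultimately show ?thesis by (simp add: algebra_simps)
qed

lemma compact_convex_nearest_point:
  fixes K :: "'a::real_inner set"
  assumes "compact K" "convex K" "K \<noteq> {}"
  obtains q where "q \<in> K" "\<And>k. k \<in> K \<Longrightarrow> inner (y - q) (k - q) \<le> 0"
proof -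
  have "continuous_on K (dist y)" by (intro continuous_intros)
  then obtain q where "q \<in> K" "\<forall>k\<in>K. dist y q \<le> dist y k"
    using continuous_attains_inf[OF assms(1,3)] by blast
  then show ?thesis
    using that any_closest_point_dot[OF assms(2) compact_imp_closed[OF assms(1)]] by blast
qed

lemma segment_toward_convex_hull_decreases_dist:
  fixes c :: "'i \<Rightarrow> 'a::real_inner"
  assumes "finite I" "I \<noteq> {}" "y \<notin> convex hull (c ` I)"
  obtains q where "q \<in> convex hull (c ` I)"
    "\<And>i t. i \<in> I \<Longrightarrow> 0 < t \<Longrightarrow> t < 1 \<Longrightarrow> norm (y + t *\<^sub>R (q - y) - c i) < norm (y - c i)"
proof -
  have "compact (convex hull (c ` I))" "convex hull (c ` I) \<noteq> {}"
    using assms(1,2) by (auto simp: finite_imp_compact_convex_hull)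
  then obtain q where q: "q \<in> convex hull (c ` I)"
    and obtuse: "\<And>k. k \<in> convex hull (c ` I) \<Longrightarrow> inner (y - q) (k - q) \<le> 0"
    using compact_convex_nearest_point[OF _ convex_convex_hull] by metis
  have "norm (y + t *\<^sub>R (q - y) - c i) < norm (y - c i)" if "i \<in> I" "0 < t" "t < 1" for i t
  proof -
    have "0 < (norm (q - y))^2" using q assms(3) by auto
    then have "0 < (2 * t - t^2) * (norm (q - y))^2" using that(2,3) by (simp add: power2_eq_square)
    moreover have "(norm (y + t *\<^sub>R (q - y) - c i))^2 \<le> (norm (y - c i))^2 - (2 * t - t^2) * (norm (q - y))^2"
      using obtuse[OF hull_inc[OF imageI[OF that(1)]]] that(2)
      by (intro sq_dist_along_segment_to_nearest) auto
    ultimately have "(norm (y + t *\<^sub>R (q - y) - c i))^2 < (norm (y - c i))^2" by linarith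
    then show ?thesis by (rule power_less_imp_less_base) simp
  qed
  then show ?thesis by (rule that[OF q])
qed

lemma min_max_sq_dist_in_active_hull:
  fixes c :: "'i \<Rightarrow> 'a::real_inner" and a :: "'i \<Rightarrow> real"
  assumes "finite G" and y0: "y0 \<in> convex hull (c ` G)"
    and below: "\<And>i. i \<in> G \<Longrightarrow> (norm (y0 - c i))^2 - a i \<le> m"
    and minimal: "\<And>y. y \<in> convex hull (c ` G) \<Longrightarrow> \<exists>i\<in>G. m \<le> (norm (y - c i))^2 - a i"
  shows "y0 \<in> convex hull (c ` {i\<in>G. (norm (y0 - c i))^2 - a i = m})"
proof (rule ccontr)
  define I where "I = {i\<in>G. (norm (y0 - c i))^2 - a i = m}"
  assume "y0 \<notin> convex hull (c ` {i\<in>G. (norm (y0 - c i))^2 - a i = m})"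
  then have "y0 \<notin> convex hull (c ` I)" unfolding I_def .
  moreover have "I \<noteq> {}" using minimal[OF y0] below unfolding I_def by force
  moreover have "finite I" unfolding I_def using \<open>finite G\<close> by simp
  ultimately obtain q where q: "q \<in> convex hull (c ` I)"
    and closer: "\<And>i t. i \<in> I \<Longrightarrow> 0 < t \<Longrightarrow> t < 1 \<Longrightarrow> norm (y0 + t *\<^sub>R (q - y0) - c i) < norm (y0 - c i)"
    using segment_toward_convex_hull_decreases_dist by blast
  define yt where "yt t = y0 + t *\<^sub>R (q - y0)" for t
  have small: "\<forall>\<^sub>F t in at_right (0::real). 0 < t \<and> t < 1"
    by (rule eventually_at_rightI[of 0 1]) auto
  have "\<forall>\<^sub>F t in at_right 0. \<forall>i\<in>G. (norm (yt t - c i))^2 - a i < m"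
  proof (intro eventually_ball_finite[OF \<open>finite G\<close>] ballI)
    fix i assume "i \<in> G"
    show "\<forall>\<^sub>F t in at_right 0. (norm (yt t - c i))^2 - a i < m"
    proof (cases "i \<in> I")
      case True
      from small show ?thesis
      proof (rule eventually_mono)
        fix t :: real assume "0 < t \<and> t < 1"
        then have "norm (yt t - c i) < norm (y0 - c i)" using closer[OF True] unfolding yt_def by blast
        then have "(norm (yt t - c i))^2 < (norm (y0 - c i))^2" by (simp add: power_strict_mono)
        then show "(norm (yt t - c i))^2 - a i < m" using True unfolding I_def by simp
      qed
    next
      case False
      then have "(norm (y0 - c i))^2 - a i < m" using below[OF \<open>i \<in> G\<close>] \<open>i \<in> G\<close> unfolding I_def by auto
      moreover have "((\<lambda>t. (norm (yt t - c i))^2 - a i) \<longlongrightarrow> (norm (y0 - c i))^2 - a i) (at_right 0)"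
        unfolding yt_def by (auto intro!: tendsto_eq_intros)
      ultimately show ?thesis by (simp add: order_tendstoD(2))
    qed
  qed
  then obtain t where t: "\<forall>i\<in>G. (norm (yt t - c i))^2 - a i < m" "0 < t" "t < 1"
    using eventually_happens[OF eventually_conj[OF _ small]] trivial_limit_at_right_real by blast
  have "q \<in> convex hull (c ` G)" using q hull_mono[of "c ` I" "c ` G"] unfolding I_def by blast
  then have "(1 - t) *\<^sub>R y0 + t *\<^sub>R q \<in> convex hull (c ` G)"
    using convexD_alt[OF convex_convex_hull y0] t by simp
  moreover have "(1 - t) *\<^sub>R y0 + t *\<^sub>R q = yt t" unfolding yt_def by (simp add: algebra_simps)
  ultimately show False using minimal t(1) by fastforce
qed

lemma continuous_on_Max_image:
  fixes f :: "'i \<Rightarrow> 'a::topological_space \<Rightarrow> real"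
  assumes "finite G" "G \<noteq> {}" "\<And>i. i \<in> G \<Longrightarrow> continuous_on S (f i)"
  shows "continuous_on S (\<lambda>y. Max ((\<lambda>i. f i y) ` G))"
  using assms
proof (induction G rule: finite_ne_induct)
  case (insert i G)
  then have "continuous_on S (\<lambda>y. max (f i y) (Max ((\<lambda>i. f i y) ` G)))"
    by (intro continuous_on_max) auto
  then show ?case using insert by simp
qed simp

text \<open>A point in all the balls is found by minimizing the largest excess
  \<open>\<parallel>y - c i\<parallel>\<^sup>2 - \<parallel>z - r i\<parallel>\<^sup>2\<close> over the convex hull of the centres.\<close>

lemma kirszbraun_finite:
  fixes c r :: "'i \<Rightarrow> 'a::real_inner"
  assumes "finite G" "G \<noteq> {}"
    and lip: "\<And>i j. i \<in> G \<Longrightarrow> j \<in> G \<Longrightarrow> norm (c i - c j) \<le> norm (r i - r j)"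
  shows "\<exists>y. \<forall>i\<in>G. norm (y - c i) \<le> norm (z - r i)"
proof -
  define f where "f i y = (norm (y - c i))^2 - (norm (z - r i))^2" for i y
  define g where "g y = Max ((\<lambda>i. f i y) ` G)" for y
  have f_le_g: "f i y \<le> g y" if "i \<in> G" for i y
    unfolding g_def using assms(1) that by simp
  have g_attained: "\<exists>i\<in>G. g y = f i y" for y
  proof -
    have "g y \<in> (\<lambda>i. f i y) ` G" unfolding g_def using assms(1,2) by (intro Max_in) auto
    then show ?thesis by auto
  qed
  have "compact (convex hull (c ` G))" "convex hull (c ` G) \<noteq> {}"
    using assms(1,2) by (auto simp: finite_imp_compact_convex_hull)
  moreover have "continuous_on (convex hull (c ` G)) g"
    unfolding g_def f_def using assms(1,2) by (intro continuous_on_Max_image continuous_intros)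
  ultimately obtain y0 where y0: "y0 \<in> convex hull (c ` G)"
    and min: "\<And>y. y \<in> convex hull (c ` G) \<Longrightarrow> g y0 \<le> g y"
    using continuous_attains_inf by metis
  define I where "I = {i\<in>G. f i y0 = g y0}"
  have "y0 \<in> convex hull (c ` I)"
    unfolding I_def f_def
  proof (rule min_max_sq_dist_in_active_hull[OF assms(1) y0])
    show "(norm (y0 - c i))^2 - (norm (z - r i))^2 \<le> g y0" if "i \<in> G" for i
      using f_le_g[OF that] unfolding f_def .
    show "\<exists>i\<in>G. g y0 \<le> (norm (y - c i))^2 - (norm (z - r i))^2" if "y \<in> convex hull (c ` G)" for y
      using min[OF that] g_attained[of y] unfolding f_def by force
  qed
  then have "g y0 \<le> 0"
    using assms(1) lip by (intro kirszbraun_active_set_le[of I c r y0 z]) (auto simp: I_def f_def)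
  then have "(norm (y0 - c i))^2 \<le> (norm (z - r i))^2" if "i \<in> G" for i
    using f_le_g[OF that, of y0] unfolding f_def by linarith
  then show ?thesis by (meson norm_ge_zero power2_le_imp_le)
qed

lemma max_monotone_memI:
  assumes "max_beta_monotone 0 A" and related: "\<And>x v. v \<in> A x \<Longrightarrow> 0 \<le> inner (p - x) (u - v)"
  shows "u \<in> A p"
proof -
  define A' where "A' = A(p := insert u (A p))"
  have mono: "0 \<le> inner (x - y) (w - v)" if "w \<in> A x" "v \<in> A y" for x y w v
    using assms(1) that unfolding max_beta_monotone_def beta_monotone_def by fastforce
  have "beta_monotone 0 A'"
    unfolding beta_monotone_def
  proof (intro allI impI)
    fix x y w v assume "w \<in> A' x" "v \<in> A' y"
    then consider "w \<in> A x" "v \<in> A y" | "w \<in> A x" "y = p" "v = u" | "x = p" "w = u" "v \<in> A y"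
      | "x = p" "w = u" "y = p" "v = u"
      unfolding A'_def by (auto split: if_splits)
    then show "0 * (norm (x - y))^2 \<le> inner (x - y) (w - v)"
    proof cases
      case 2
      then show ?thesis using related[of w x] by (simp add: inner_diff_left inner_diff_right)
    qed (use mono related in auto)
  qed
  moreover have "\<forall>x. A x \<subseteq> A' x" unfolding A'_def by auto
  ultimately have "A' = A" using assms(1) unfolding max_beta_monotone_def by blast
  then show ?thesis unfolding A'_def by (metis fun_upd_same insertI1)
qed

lemma monotone_graph_cballs_intersect:
  fixes A :: "'a::{real_inner,complete_space} \<Rightarrow> 'a set"
  assumes "beta_monotone 0 A"
  obtains y where "\<And>a b. b \<in> A a \<Longrightarrow> norm (y - (a - b)) \<le> norm (z - (a + b))"
proof -
  have mono: "0 \<le> inner (x - y) (u - v)" if "u \<in> A x" "v \<in> A y" for x y u v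
    using assms that unfolding beta_monotone_def by fastforce
  define graph where "graph = {(a, b). b \<in> A a}"
  define ball_of where "ball_of g = cball (fst g - snd g) (norm (z - (fst g + snd g)))" for g
  have "\<Inter>(ball_of ` graph) \<noteq> {}"
  proof (rule bounded_closed_convex_fip)
    fix \<G> assume "\<G> \<subseteq> ball_of ` graph" "finite \<G>" "\<G> \<noteq> {}"
    then obtain H where H: "H \<subseteq> graph" "finite H" "H \<noteq> {}" "\<G> = ball_of ` H"
      by (metis finite_subset_image image_is_empty)
    have "norm ((fst g - snd g) - (fst h - snd h)) \<le> norm ((fst g + snd g) - (fst h + snd h))"
      if "g \<in> H" "h \<in> H" for g h
    proof -
      have "snd g \<in> A (fst g)" "snd h \<in> A (fst h)"
        using that H(1) unfolding graph_def by auto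
      then have "0 \<le> inner (fst g - fst h) (snd g - snd h)" by (rule mono)
      then have "(norm ((fst g - fst h) - (snd g - snd h)))^2 \<le> (norm ((fst g - fst h) + (snd g - snd h)))^2"
        unfolding power2_norm_add power2_norm_diff by simp
      moreover have "(fst g - snd g) - (fst h - snd h) = (fst g - fst h) - (snd g - snd h)"
        "(fst g + snd g) - (fst h + snd h) = (fst g - fst h) + (snd g - snd h)"
        by (simp_all add: algebra_simps)
      ultimately show ?thesis by (metis norm_ge_zero power2_le_imp_le)
    qed
    then obtain y where "\<forall>g\<in>H. norm (y - (fst g - snd g)) \<le> norm (z - (fst g + snd g))"
      using kirszbraun_finite[OF H(2,3), of "\<lambda>g. fst g - snd g" "\<lambda>g. fst g + snd g" z] by blast
    then have "y \<in> \<Inter>\<G>" unfolding H(4) ball_of_def by (auto simp: dist_norm norm_minus_commute)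
    then show "\<Inter>\<G> \<noteq> {}" by blast
  qed (auto simp: ball_of_def)
  then obtain y where y: "y \<in> \<Inter>(ball_of ` graph)" by blast
  have "norm (y - (a - b)) \<le> norm (z - (a + b))" if "b \<in> A a" for a b
    using y that unfolding ball_of_def graph_def by (auto simp: dist_norm norm_minus_commute)
  then show ?thesis by (rule that)
qed

theorem minty_surjective:
  fixes A :: "'a::{real_inner,complete_space} \<Rightarrow> 'a set"
  assumes "max_beta_monotone 0 A"
  shows "\<exists>p. z - p \<in> A p"
proof -
  obtain y where y: "\<And>a b. b \<in> A a \<Longrightarrow> norm (y - (a - b)) \<le> norm (z - (a + b))"
    using assms monotone_graph_cballs_intersect unfolding max_beta_monotone_def by blast
  define p where "p = (1/2) *\<^sub>R (z + y)"
  define u where "u = (1/2) *\<^sub>R (z - y)"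
  have "u \<in> A p"
  proof (rule max_monotone_memI[OF assms])
    fix a b assume "b \<in> A a"
    define P where "P = z - (a + b)"
    define Q where "Q = y - (a - b)"
    have halves: "p - a = (1/2) *\<^sub>R (P + Q)" "u - b = (1/2) *\<^sub>R (P - Q)"
      unfolding p_def u_def P_def Q_def by (simp_all add: algebra_simps scaleR_add_left[symmetric])
    have "4 * inner (p - a) (u - b) = (norm P)^2 - (norm Q)^2"
      unfolding halves by (simp add: power2_norm_eq_inner inner_add inner_diff inner_commute algebra_simps)
    moreover have "(norm Q)^2 \<le> (norm P)^2"
      using y[OF \<open>b \<in> A a\<close>] unfolding P_def Q_def by (simp add: power_mono)
    ultimately show "0 \<le> inner (p - a) (u - b)" by linarith
  qed
  moreover have "z - p = u" unfolding p_def u_def by (simp add: algebra_simps scaleR_add_left[symmetric])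
  ultimately show ?thesis by auto
qed

section \<open>Resolvents of maximally \<open>\<beta>\<close>-monotone operators\<close>

lemma max_beta_monotone_shift:
  assumes mb: "max_beta_monotone \<beta> B" and "0 < \<kappa>"
  shows "max_beta_monotone 0 (\<lambda>x. (\<lambda>u. \<kappa> *\<^sub>R (u - \<beta> *\<^sub>R x)) ` B x)"
    (is "max_beta_monotone 0 ?A")
proof -
  have shift_inner: "inner (x - y) (\<kappa> *\<^sub>R (u - \<beta> *\<^sub>R x) - \<kappa> *\<^sub>R (v - \<beta> *\<^sub>R y))
      = \<kappa> * (inner (x - y) (u - v) - \<beta> * (norm (x - y))^2)" for x y u v
    by (simp add: power2_norm_eq_inner inner_diff inner_scaleR_right algebra_simps)
  have "beta_monotone 0 ?A"
    using mb \<open>0 < \<kappa>\<close> unfolding max_beta_monotone_def beta_monotone_def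
    by (auto simp: shift_inner)
  moreover have "A' = ?A" if "beta_monotone 0 A'" "\<forall>x. ?A x \<subseteq> A' x" for A'
  proof -
    define B' where "B' x = (\<lambda>a. (1/\<kappa>) *\<^sub>R a + \<beta> *\<^sub>R x) ` A' x" for x
    have unshift_inner: "inner (x - y) (((1/\<kappa>) *\<^sub>R a + \<beta> *\<^sub>R x) - ((1/\<kappa>) *\<^sub>R b + \<beta> *\<^sub>R y))
        = (1/\<kappa>) * inner (x - y) (a - b) + \<beta> * (norm (x - y))^2" for x y a b :: 'a
      by (simp add: power2_norm_eq_inner inner_diff inner_add_right inner_scaleR_right algebra_simps)
    have "beta_monotone \<beta> B'"
      using that(1) \<open>0 < \<kappa>\<close> unfolding beta_monotone_def B'_def
      by (auto simp: unshift_inner)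
    moreover have "\<forall>x. B x \<subseteq> B' x"
    proof (intro allI subsetI)
      fix x u assume "u \<in> B x"
      then have "\<kappa> *\<^sub>R (u - \<beta> *\<^sub>R x) \<in> A' x" using that(2) by blast
      then show "u \<in> B' x" unfolding B'_def using \<open>0 < \<kappa>\<close> by (force intro: rev_image_eqI)
    qed
    ultimately have "B' = B" using mb unfolding max_beta_monotone_def by blast
    then have "A' x \<subseteq> ?A x" for x
      using \<open>0 < \<kappa>\<close> unfolding B'_def by (auto simp: image_iff)
    then show ?thesis using that(2) by (intro ext subset_antisym) auto
  qed
  ultimately show ?thesis unfolding max_beta_monotone_def by blast
qed

lemma resolvent_scaled_exists:
  fixes B :: "'a::{real_inner,complete_space} \<Rightarrow> 'a set"
  assumes "0 \<le> \<beta>" "max_beta_monotone \<beta> B" "0 < \<gamma>"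
  shows "\<exists>p. \<exists>u\<in>B p. z = p + \<gamma> *\<^sub>R u"
proof -
  define \<kappa> where "\<kappa> = \<gamma> / (1 + \<gamma> * \<beta>)"
  have pos: "0 < 1 + \<gamma> * \<beta>" using assms by (simp add: add_pos_nonneg)
  then have "0 < \<kappa>" unfolding \<kappa>_def using assms(3) by simp
  obtain p where "(1 / (1 + \<gamma> * \<beta>)) *\<^sub>R z - p \<in> (\<lambda>u. \<kappa> *\<^sub>R (u - \<beta> *\<^sub>R p)) ` B p"
    using minty_surjective[OF max_beta_monotone_shift[OF assms(2) \<open>0 < \<kappa>\<close>]] by blast
  then obtain u where u: "u \<in> B p" "(1 / (1 + \<gamma> * \<beta>)) *\<^sub>R z = p + \<kappa> *\<^sub>R (u - \<beta> *\<^sub>R p)"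
    by (auto simp: algebra_simps)
  have "z = (1 + \<gamma> * \<beta>) *\<^sub>R (p + \<kappa> *\<^sub>R (u - \<beta> *\<^sub>R p))"
    using pos by (simp flip: u(2))
  also have "\<dots> = (1 + \<gamma> * \<beta>) *\<^sub>R p + ((1 + \<gamma> * \<beta>) * \<kappa>) *\<^sub>R (u - \<beta> *\<^sub>R p)"
    by (simp add: scaleR_add_right)
  also have "\<dots> = p + \<gamma> *\<^sub>R u"
  proof -
    have "(1 + \<gamma> * \<beta>) * \<kappa> = \<gamma>" unfolding \<kappa>_def using pos by simp
    then show ?thesis by (simp add: algebra_simps)
  qed
  finally show ?thesis using u(1) by blast
qed

lemma resolvent_scaled_unique:
  fixes B :: "'a::real_inner \<Rightarrow> 'a set"
  assumes "0 \<le> \<beta>" "beta_monotone \<beta> B" "0 < \<gamma>"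
    and "u \<in> B p" "z = p + \<gamma> *\<^sub>R u" "v \<in> B q" "z = q + \<gamma> *\<^sub>R v"
  shows "p = q"
proof -
  have "\<beta> * (norm (p - q))^2 \<le> inner (p - q) (u - v)"
    using assms(2,4,6) unfolding beta_monotone_def by blast
  moreover have "\<gamma> * inner (p - q) (u - v) = - ((norm (p - q))^2)"
  proof -
    have "\<gamma> *\<^sub>R (u - v) = q - p" using assms(5,7) by (simp add: algebra_simps)
    then show ?thesis
      by (metis inner_scaleR_right inner_minus_right minus_diff_eq power2_norm_eq_inner)
  qed
  ultimately have "(norm (p - q))^2 \<le> 0"
    using assms(1,3) by (smt (verit) mult_nonneg_nonneg zero_le_power2)
  then show ?thesis by simp
qed

lemma
  fixes B :: "'a::{real_inner,complete_space} \<Rightarrow> 'a set"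
  assumes "0 \<le> \<beta>" "max_beta_monotone \<beta> B" "0 < \<gamma>"
  shows resolvent_scaled_mem: "\<exists>u\<in>B (resolvent (op_scale \<gamma> B) z). z = resolvent (op_scale \<gamma> B) z + \<gamma> *\<^sub>R u"
    and resolvent_scaled_eqI: "u \<in> B p \<Longrightarrow> z = p + \<gamma> *\<^sub>R u \<Longrightarrow> resolvent (op_scale \<gamma> B) z = p"
proof -
  have char: "z \<in> (\<lambda>w. p + w) ` op_scale \<gamma> B p \<longleftrightarrow> (\<exists>u\<in>B p. z = p + \<gamma> *\<^sub>R u)" for p
    unfolding op_scale_def by auto
  have "beta_monotone \<beta> B" using assms(2) unfolding max_beta_monotone_def by blast
  then have ex1: "\<exists>!p. z \<in> (\<lambda>w. p + w) ` op_scale \<gamma> B p"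
    unfolding char using resolvent_scaled_exists[OF assms] resolvent_scaled_unique[OF assms(1) _ assms(3)]
    by blast
  show "\<exists>u\<in>B (resolvent (op_scale \<gamma> B) z). z = resolvent (op_scale \<gamma> B) z + \<gamma> *\<^sub>R u"
    using theI'[OF ex1] unfolding resolvent_def char .
  show "resolvent (op_scale \<gamma> B) z = p" if "u \<in> B p" "z = p + \<gamma> *\<^sub>R u"
  proof -
    have "z \<in> (\<lambda>w. p + w) ` op_scale \<gamma> B p" unfolding char using that by blast
    then show ?thesis unfolding resolvent_def by (rule the1_equality[OF ex1])
  qed
qed

section \<open>Averaged operators and real sequences\<close>

lemma averagedI:
  fixes T :: "'a::real_inner \<Rightarrow> 'a"
  assumes "0 < \<theta>" "\<theta> < 1"
    and "\<And>u v. (norm (T u - T v))^2 \<le> (norm (u - v))^2 - (1/\<theta> - 1) * (norm ((u - T u) - (v - T v)))^2"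
  shows "averaged \<theta> T"
proof -
  define N where "N z = (1/\<theta>) *\<^sub>R (T z - (1 - \<theta>) *\<^sub>R z)" for z
  have "T z = (1 - \<theta>) *\<^sub>R z + \<theta> *\<^sub>R N z" for z
    unfolding N_def using assms(1) by simp
  moreover have "nonexpansive N"
    unfolding nonexpansive_def
  proof (intro allI)
    fix u v :: 'a
    define D where "D = u - v"
    define W where "W = (u - T u) - (v - T v)"
    have "N u - N v = (1/\<theta>) *\<^sub>R ((T u - T v) - (1 - \<theta>) *\<^sub>R D)"
      unfolding N_def D_def by (simp add: algebra_simps)
    also have "T u - T v = D - W" unfolding D_def W_def by (simp add: algebra_simps)
    finally have ND: "N u - N v = D - (1/\<theta>) *\<^sub>R W"
      using assms(1) by (simp add: algebra_simps)
    have "(norm (D - W))^2 \<le> (norm D)^2 - (1/\<theta> - 1) * (norm W)^2"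
      using assms(3)[of u v] unfolding D_def W_def by (simp add: algebra_simps)
    then have "(1/\<theta>) * (2 * inner D W) \<ge> (1/\<theta>) * ((1/\<theta>) * (norm W)^2)"
      using assms(1) unfolding power2_norm_diff by (intro mult_left_mono) (auto simp: algebra_simps)
    then have "(norm (D - (1/\<theta>) *\<^sub>R W))^2 \<le> (norm D)^2"
      unfolding power2_norm_diff by (simp add: power2_eq_square algebra_simps)
    then show "norm (N u - N v) \<le> norm (u - v)"
      unfolding ND D_def by (rule power2_le_imp_le) simp
  qed
  ultimately show ?thesis unfolding averaged_def using assms(1,2) by blast
qed

lemma averaged_imp_nonexpansive:
  assumes "averaged \<theta> T"
  shows "nonexpansive T"
proof -
  obtain N where N: "nonexpansive N" "\<And>x. T x = (1 - \<theta>) *\<^sub>R x + \<theta> *\<^sub>R N x"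
    and "0 < \<theta>" "\<theta> < 1"
    using assms unfolding averaged_def by blast
  have "norm (T u - T v) \<le> norm (u - v)" for u v
  proof -
    have "T u - T v = (1 - \<theta>) *\<^sub>R (u - v) + \<theta> *\<^sub>R (N u - N v)"
      unfolding N(2) by (simp add: algebra_simps)
    then have "norm (T u - T v) \<le> norm ((1 - \<theta>) *\<^sub>R (u - v)) + norm (\<theta> *\<^sub>R (N u - N v))"
      by (simp only: norm_triangle_ineq)
    also have "\<dots> = (1 - \<theta>) * norm (u - v) + \<theta> * norm (N u - N v)"
      using \<open>0 < \<theta>\<close> \<open>\<theta> < 1\<close> by simp
    also have "\<dots> \<le> norm (u - v)"
      using N(1) \<open>0 < \<theta>\<close> unfolding nonexpansive_def by (simp add: mult_left_mono algebra_simps)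
    finally show ?thesis .
  qed
  then show ?thesis unfolding nonexpansive_def by blast
qed

lemma summable_if_descent:
  fixes a t :: "nat \<Rightarrow> real"
  assumes "\<And>n. 0 \<le> a n" "\<And>n. 0 \<le> t n" "0 < c" and descent: "\<And>n. a (Suc n) + c * t n \<le> a n"
  shows "summable t"
proof -
  have "a (Suc n) \<le> a n" for n using descent[of n] assms(2,3) by (smt (verit) mult_nonneg_nonneg)
  then obtain L where "a \<longlonglongrightarrow> L"
    using decseq_convergent[of a 0] decseq_SucI[of a] assms(1) by blast
  then have "summable (\<lambda>n. (1/c) * (a n - a (Suc n)))"
    by (intro summable_mult telescope_summable')
  then show ?thesis
  proof (rule summable_comparison_test'[where N = 0])
    show "norm (t n) \<le> (1/c) * (a n - a (Suc n))" for n
      using descent[of n] assms(2,3) by (simp add: field_simps)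
  qed
qed

lemma summable_power2_norm_imp_LIMSEQ_zero:
  fixes f :: "nat \<Rightarrow> 'a::real_normed_vector"
  assumes "summable (\<lambda>n. (norm (f n))^2)"
  shows "f \<longlonglongrightarrow> 0"
proof -
  have "(\<lambda>n. sqrt ((norm (f n))^2)) \<longlonglongrightarrow> sqrt 0"
    using summable_LIMSEQ_zero[OF assms] by (rule tendsto_real_sqrt)
  then show ?thesis by (simp add: tendsto_norm_zero_iff)
qed

lemma antimono_summable_power2_smallo:
  fixes s :: "nat \<Rightarrow> real"
  assumes "\<And>n. 0 \<le> s n" "\<And>n. s (Suc n) \<le> s n" "summable (\<lambda>n. (s n)^2)"
  shows "s \<in> o(\<lambda>n. 1 / sqrt (real n))"
proof (rule landau_o.smallI)
  fix c :: real assume "c > 0"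
  have s_anti: "s n \<le> s k" if "k \<le> n" for k n
    using decseq_SucI[of s, OF assms(2)] that by (simp add: antimono_def)
  obtain N where N: "\<And>m n. m \<ge> N \<Longrightarrow> norm (\<Sum>k\<in>{m..<n}. (s k)^2) < c^2 / 2"
    using assms(3) \<open>c > 0\<close> unfolding summable_Cauchy by (meson half_gt_zero zero_less_power)
  \<comment> \<open>the block \<open>{n div 2..<n}\<close> has at least \<open>n/2\<close> terms, each at least \<open>(s n)^2\<close>\<close>
  have "s n \<le> c * norm (1 / sqrt (real n))" if "n \<ge> 2 * N + 2" for n
  proof -
    define m where "m = n div 2"
    have "real n / 2 * (s n)^2 \<le> real (n - m) * (s n)^2"
      unfolding m_def by (intro mult_right_mono) (auto simp: of_nat_diff)
    also have "\<dots> = (\<Sum>k\<in>{m..<n}. (s n)^2)" by simp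
    also have "\<dots> \<le> (\<Sum>k\<in>{m..<n}. (s k)^2)"
      by (intro sum_mono power_mono) (use s_anti assms(1) in auto)
    also have "\<dots> < c^2 / 2"
      using N[of m n] that unfolding m_def by (simp add: sum_nonneg)
    finally have "(s n * sqrt (real n))^2 < c^2"
      by (simp add: power_mult_distrib mult.commute)
    then have "s n * sqrt (real n) < c" using \<open>c > 0\<close> by (simp add: power_less_imp_less_base)
    then show ?thesis using that by (simp add: field_simps)
  qed
  then show "\<forall>\<^sub>F n in sequentially. norm (s n) \<le> c * norm (1 / sqrt (real n))"
    unfolding eventually_sequentially using assms(1) by (metis real_norm_def abs_of_nonneg)
qed

section \<open>Weak convergence of Fejer sequences\<close>

text \<open>Points common to all \<open>tail_hull x (\<lambda>_. True) N\<close> stand in for the weak cluster points of \<open>x\<close>.\<close>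

definition tail_hull :: "(nat \<Rightarrow> 'a::real_normed_vector) \<Rightarrow> (nat \<Rightarrow> bool) \<Rightarrow> nat \<Rightarrow> 'a set" where
  "tail_hull x P N = closure (convex hull {x n | n. N \<le> n \<and> P n})"

lemma tail_hull_subset:
  assumes "closed H" "convex H" "\<And>n. N \<le> n \<Longrightarrow> P n \<Longrightarrow> x n \<in> H"
  shows "tail_hull x P N \<subseteq> H"
  unfolding tail_hull_def using assms
  by (intro closure_minimal hull_minimal) auto

lemma tail_hull_mono: "N \<le> M \<Longrightarrow> (\<And>n. Q n \<Longrightarrow> P n) \<Longrightarrow> tail_hull x Q M \<subseteq> tail_hull x P N"
  unfolding tail_hull_def by (intro closure_mono hull_mono) auto

lemma Inter_tail_hull_nonempty:
  fixes x :: "nat \<Rightarrow> 'a::{real_inner,complete_space}"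
  assumes "bounded (range x)" "frequently P sequentially"
  shows "\<Inter>(range (tail_hull x P)) \<noteq> {}"
proof (rule closed_convex_directed_Inter_nonempty)
  show "closed S \<and> convex S \<and> S \<noteq> {}" if S: "S \<in> range (tail_hull x P)" for S
  proof -
    obtain N where N: "S = tail_hull x P N" using S by blast
    obtain n where "N \<le> n" "P n" using assms(2) unfolding frequently_sequentially by blast
    then have "x n \<in> S" unfolding N tail_hull_def by (blast intro: closure_subset[THEN subsetD] hull_inc)
    then show ?thesis unfolding N tail_hull_def by (auto simp: convex_closure simp del: closure_eq_empty)
  qed
  show "S \<inter> S' \<in> range (tail_hull x P)"
    if SS': "S \<in> range (tail_hull x P)" "S' \<in> range (tail_hull x P)" for S S'
  proof -
    obtain N N' where "S = tail_hull x P N" "S' = tail_hull x P N'" using SS' by blast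
    then have "S' \<subseteq> S \<or> S \<subseteq> S'" using tail_hull_mono nat_le_linear by metis
    then have "S \<inter> S' = S' \<or> S \<inter> S' = S" by blast
    then show ?thesis using SS' by auto
  qed
  obtain R where "\<And>n. norm (x n) \<le> R" using assms(1) unfolding bounded_iff by blast
  then have "tail_hull x P N \<subseteq> cball 0 R" for N by (intro tail_hull_subset) auto
  then have "\<Union>(range (tail_hull x P)) \<subseteq> cball 0 R" by blast
  then show "bounded (\<Union>(range (tail_hull x P)))" using bounded_cball bounded_subset by blast
qed simp

lemma Inter_tail_hull_inner_eq_limit:
  fixes x :: "nat \<Rightarrow> 'a::real_inner"
  assumes "q \<in> \<Inter>(range (tail_hull x (\<lambda>_. True)))" "(\<lambda>n. inner (x n) v) \<longlonglongrightarrow> l"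
  shows "inner q v = l"
proof -
  have "\<bar>inner q v - l\<bar> \<le> 0 + e" if "0 < e" for e
  proof -
    obtain N where N: "\<And>n. N \<le> n \<Longrightarrow> \<bar>inner (x n) v - l\<bar> < e"
      using assms(2) \<open>0 < e\<close> unfolding LIMSEQ_def dist_real_def by blast
    define H where "H = {y. inner v y \<le> l + e} \<inter> {y. inner (- v) y \<le> e - l}"
    have "closed H" "convex H" unfolding H_def
      by (intro closed_Int convex_Int closed_halfspace_le convex_halfspace_le)+
    moreover have "x n \<in> H" if "N \<le> n" for n
      using N[OF that] unfolding H_def by (auto simp: inner_commute)
    ultimately have "tail_hull x (\<lambda>_. True) N \<subseteq> H" by (intro tail_hull_subset)
    then have "q \<in> H" using assms(1) by blast
    then show ?thesis unfolding H_def by (auto simp: inner_commute)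
  qed
  then show ?thesis using field_le_epsilon[of "\<bar>inner q v - l\<bar>" 0] by simp
qed

lemma Inter_tail_hull_unique:
  fixes x :: "nat \<Rightarrow> 'a::real_inner"
  assumes "q \<in> \<Inter>(range (tail_hull x (\<lambda>_. True)))" "q' \<in> \<Inter>(range (tail_hull x (\<lambda>_. True)))"
    and "convergent (\<lambda>n. (norm (x n - q))^2)" "convergent (\<lambda>n. (norm (x n - q'))^2)"
  shows "q = q'"
proof -
  obtain L L' where L: "(\<lambda>n. (norm (x n - q))^2) \<longlonglongrightarrow> L" "(\<lambda>n. (norm (x n - q'))^2) \<longlonglongrightarrow> L'"
    using assms(3,4) unfolding convergent_def by blast
  have polar: "inner (x n) (q' - q) = ((norm (x n - q))^2 - (norm (x n - q'))^2 + (norm q')^2 - (norm q)^2) / 2" for n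
    by (simp add: power2_norm_eq_inner inner_diff algebra_simps inner_commute)
  have "(\<lambda>n. inner (x n) (q' - q)) \<longlonglongrightarrow> (L - L' + (norm q')^2 - (norm q)^2) / 2"
    unfolding polar by (intro tendsto_intros L) simp
  then have "inner q' (q' - q) - inner q (q' - q) = 0"
    using Inter_tail_hull_inner_eq_limit assms(1,2) by (metis diff_self)
  then have "(norm (q' - q))^2 = 0" by (simp add: power2_norm_eq_inner inner_diff_left)
  then show ?thesis by simp
qed

lemma weakly_converges_if_Inter_tail_hull_subset:
  fixes x :: "nat \<Rightarrow> 'a::{real_inner,complete_space}"
  assumes "bounded (range x)" and unique: "\<Inter>(range (tail_hull x (\<lambda>_. True))) \<subseteq> {xs}"
  shows "weakly_converges x xs"
proof -
  have rarely: "\<not> (\<exists>\<^sub>F n in sequentially. e \<le> inner (x n - xs) y)" if "0 < e" for y e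
  proof
    assume frequently: "\<exists>\<^sub>F n in sequentially. e \<le> inner (x n - xs) y"
    define P where "P n \<longleftrightarrow> e \<le> inner (x n - xs) y" for n
    obtain q where q: "q \<in> \<Inter>(range (tail_hull x P))"
      using Inter_tail_hull_nonempty[OF assms(1)] frequently unfolding P_def by blast
    then have "q = xs" using unique tail_hull_mono[of _ _ P "\<lambda>_. True" x] by blast
    \<comment> \<open>the subsequence selected by \<open>P\<close> stays in a closed half-space that misses \<open>xs\<close>\<close>
    define H where "H = {z. inner (- y) z \<le> - (e + inner xs y)}"
    have "closed H" "convex H" unfolding H_def by (rule closed_halfspace_le convex_halfspace_le)+
    moreover have "x n \<in> H" if "P n" for n
      using that unfolding P_def H_def by (simp add: inner_diff_left inner_diff_right inner_commute)
    ultimately have "tail_hull x P 0 \<subseteq> H" by (intro tail_hull_subset)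
    then show False using q \<open>q = xs\<close> \<open>0 < e\<close> unfolding H_def by (auto simp: inner_commute)
  qed
  show ?thesis
    unfolding weakly_converges_def
  proof (intro allI tendstoI)
    fix y and e :: real assume "0 < e"
    have "\<forall>\<^sub>F n in sequentially. inner (x n - xs) y < e \<and> inner (x n - xs) (- y) < e"
      using rarely[OF \<open>0 < e\<close>, of y] rarely[OF \<open>0 < e\<close>, of "- y"]
      by (simp add: not_frequently eventually_conj_iff not_le)
    then show "\<forall>\<^sub>F n in sequentially. dist (inner (x n) y) (inner xs y) < e"
      by eventually_elim (auto simp: dist_real_def inner_diff_left)
  qed
qed

lemma Inter_tail_hull_fixed_point:
  fixes T :: "'a::real_inner \<Rightarrow> 'a"
  assumes "nonexpansive T" "bounded (range x)" and residual: "(\<lambda>n. x n - T (x n)) \<longlonglongrightarrow> 0"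
    and q: "q \<in> \<Inter>(range (tail_hull x (\<lambda>_. True)))"
  shows "T q = q"
proof (rule ccontr)
  define v where "v = q - T q"
  assume "T q \<noteq> q"
  then have "0 < (norm v)^2" unfolding v_def by simp
  obtain M where "\<And>n. norm (x n) \<le> M" using assms(2) unfolding bounded_iff by blast
  then have R: "norm (x n - q) \<le> M + norm q" for n
    using norm_triangle_ineq4[of "x n" q] by (smt (verit))
  define R where "R = M + norm q"
  define \<epsilon> where "\<epsilon> n = norm (x n - T (x n))" for n
  have bound: "(norm v)^2 + 2 * inner (x n - q) v \<le> \<epsilon> n * (2 * R + \<epsilon> n)" for n
  proof -
    have "norm (x n - T q) \<le> \<epsilon> n + norm (T (x n) - T q)"
      unfolding \<epsilon>_def by (metis diff_add_cancel norm_triangle_ineq add_diff_eq)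
    also have "\<dots> \<le> \<epsilon> n + norm (x n - q)" using assms(1) unfolding nonexpansive_def by simp
    finally have "(norm ((x n - q) + v))^2 \<le> (\<epsilon> n + norm (x n - q))^2"
      unfolding v_def by (simp add: power_mono)
    then have "(norm v)^2 + 2 * inner (x n - q) v \<le> \<epsilon> n * (2 * norm (x n - q) + \<epsilon> n)"
      unfolding power2_norm_add by (simp add: power2_eq_square algebra_simps)
    also have "\<dots> \<le> \<epsilon> n * (2 * R + \<epsilon> n)"
      using R[of n] unfolding R_def by (intro mult_left_mono) (auto simp: \<epsilon>_def)
    finally show ?thesis .
  qed
  have "(\<lambda>n. \<epsilon> n * (2 * R + \<epsilon> n)) \<longlonglongrightarrow> 0 * (2 * R + 0)"
    using tendsto_norm_zero[OF residual] unfolding \<epsilon>_def by (intro tendsto_intros)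
  then obtain N where N: "\<And>n. N \<le> n \<Longrightarrow> \<epsilon> n * (2 * R + \<epsilon> n) < (norm v)^2 / 2"
    using \<open>0 < (norm v)^2\<close> order_tendstoD(2)[of _ 0 sequentially "(norm v)^2 / 2"]
    unfolding eventually_sequentially by force
  define H where "H = {y. inner v y \<le> inner v q - (norm v)^2 / 4}"
  have "closed H" "convex H" unfolding H_def by (rule closed_halfspace_le convex_halfspace_le)+
  moreover have "x n \<in> H" if "N \<le> n" for n
  proof -
    have "inner (x n - q) v < - ((norm v)^2 / 4)" using bound[of n] N[OF that] by linarith
    then have "inner (x n) v - inner q v < - ((norm v)^2 / 4)" by (simp only: inner_diff_left)
    then show ?thesis unfolding H_def by (simp add: inner_commute[of v])
  qed
  ultimately have "tail_hull x (\<lambda>_. True) N \<subseteq> H" by (intro tail_hull_subset)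
  then have "q \<in> H" using q by blast
  then show False using \<open>0 < (norm v)^2\<close> unfolding H_def by simp
qed

theorem fejer_weakly_converges:
  fixes T :: "'a::{real_inner,complete_space} \<Rightarrow> 'a" and x :: "nat \<Rightarrow> 'a"
  assumes "nonexpansive T" "\<And>n. x (Suc n) = T (x n)" "T p = p"
    and "(\<lambda>n. x n - T (x n)) \<longlonglongrightarrow> 0"
  shows "\<exists>q. T q = q \<and> weakly_converges x q"
proof -
  have fejer: "norm (x (Suc n) - q) \<le> norm (x n - q)" if "T q = q" for q n
  proof -
    have "norm (T (x n) - T q) \<le> norm (x n - q)" using assms(1) unfolding nonexpansive_def by blast
    then show ?thesis using that assms(2) by simp
  qed
  have dist_p: "norm (x n - p) \<le> norm (x 0 - p)" for n
  proof (induction n)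
    case (Suc n)
    then show ?case using fejer[OF assms(3), of n] by linarith
  qed simp
  have "norm (x n) \<le> norm (x 0 - p) + norm p" for n
    using dist_p[of n] norm_triangle_sub[of "x n" p] by linarith
  then have bounded: "bounded (range x)" by (intro boundedI) auto
  have convergent: "convergent (\<lambda>n. (norm (x n - q))^2)" if fixpt: "T q = q" for q
  proof -
    have "decseq (\<lambda>n. norm (x n - q))" by (intro decseq_SucI fejer[OF fixpt])
    then obtain L where "(\<lambda>n. norm (x n - q)) \<longlonglongrightarrow> L" by (rule decseq_convergent[of _ 0]) auto
    then show ?thesis unfolding convergent_def by (blast dest: tendsto_power)
  qed
  define Q where "Q = \<Inter>(range (tail_hull x (\<lambda>_. True)))"
  have fixed: "T q = q" if "q \<in> Q" for q
    using Inter_tail_hull_fixed_point[OF assms(1) bounded assms(4)] that unfolding Q_def .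
  have "Q \<noteq> {}" unfolding Q_def by (rule Inter_tail_hull_nonempty[OF bounded]) simp
  then obtain xs where "xs \<in> Q" by blast
  have "q = xs" if "q \<in> Q" for q
    using Inter_tail_hull_unique that \<open>xs \<in> Q\<close> convergent[OF fixed] unfolding Q_def by metis
  then have "weakly_converges x xs"
    by (intro weakly_converges_if_Inter_tail_hull_subset[OF bounded]) (auto simp: Q_def)
  then show ?thesis using fixed[OF \<open>xs \<in> Q\<close>] by blast
qed

section \<open>The forward-backward operator\<close>

lemma forward_backward_step_ineq:
  fixes d e c :: "'a::real_inner"
  assumes mon: "\<gamma> * \<beta> * (norm e)^2 \<le> inner e (d - \<gamma> *\<^sub>R c - e)"
    and coc: "\<sigma> * (norm c)^2 \<le> inner d c"
    and "0 < \<sigma>" "0 < \<eta>" "0 < \<gamma>"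
  shows "(norm (d - \<eta> *\<^sub>R (d - e)))^2 \<le> (norm d)^2
     - ((4 * \<sigma> - \<gamma>) / (2 * \<eta> * \<sigma>) - 1) * (norm (\<eta> *\<^sub>R (d - e)))^2
     - \<gamma> / (2 * \<eta> * \<sigma>) * (norm (\<eta> *\<^sub>R (d - e) - (2 * \<eta> * \<sigma>) *\<^sub>R c))^2
     - 2 * \<eta> * \<gamma> * \<beta> * (norm e)^2"
proof -
  define w where "w = d - e"
  have "inner e (d - \<gamma> *\<^sub>R c - e) = inner (d - w) (w - \<gamma> *\<^sub>R c)"
    unfolding w_def by (simp add: algebra_simps)
  then have mon': "\<gamma> * \<beta> * (norm e)^2 \<le> inner d w - \<gamma> * inner d c - (norm w)^2 + \<gamma> * inner w c"
    using mon by (simp add: inner_diff power2_norm_eq_inner inner_commute algebra_simps)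
  have "\<gamma> * (\<sigma> * (norm c)^2) \<le> \<gamma> * inner d c" using coc \<open>0 < \<gamma>\<close> by simp
  with mon' have "0 \<le> inner d w - (norm w)^2 + \<gamma> * inner w c - \<gamma> * \<sigma> * (norm c)^2
      - \<gamma> * \<beta> * (norm e)^2"
    by (simp add: algebra_simps)
  then have "0 \<le> 2 * \<eta> * (inner d w - (norm w)^2 + \<gamma> * inner w c - \<gamma> * \<sigma> * (norm c)^2
      - \<gamma> * \<beta> * (norm e)^2)"
    using \<open>0 < \<eta>\<close> by simp
  moreover have L: "(norm (d - \<eta> *\<^sub>R (d - e)))^2 = (norm d)^2 - 2 * \<eta> * inner d w + \<eta>^2 * (norm w)^2"
    unfolding w_def[symmetric] power2_norm_diff by (simp add: power_mult_distrib)
  moreover have R1: "(norm (\<eta> *\<^sub>R (d - e)))^2 = \<eta>^2 * (norm w)^2"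
    unfolding w_def by (simp add: power_mult_distrib)
  moreover have R2: "(norm (\<eta> *\<^sub>R (d - e) - (2 * \<eta> * \<sigma>) *\<^sub>R c))^2
      = \<eta>^2 * (norm w)^2 - 4 * \<eta>^2 * \<sigma> * inner w c + 4 * \<eta>^2 * \<sigma>^2 * (norm c)^2"
    unfolding w_def[symmetric] power2_norm_diff by (simp add: power_mult_distrib power2_eq_square algebra_simps)
  moreover have "((4 * \<sigma> - \<gamma>) / (2 * \<eta> * \<sigma>) - 1) * (\<eta>^2 * (norm w)^2)
      + \<gamma> / (2 * \<eta> * \<sigma>) * (\<eta>^2 * (norm w)^2 - 4 * \<eta>^2 * \<sigma> * inner w c + 4 * \<eta>^2 * \<sigma>^2 * (norm c)^2)
      = 2 * \<eta> * (norm w)^2 - \<eta>^2 * (norm w)^2 - 2 * \<gamma> * \<eta> * inner w c + 2 * \<gamma> * \<eta> * \<sigma> * (norm c)^2"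
    using \<open>0 < \<sigma>\<close> \<open>0 < \<eta>\<close> by (simp add: field_simps power2_eq_square)
  ultimately show ?thesis by (simp only: R1 R2 L) (simp add: algebra_simps)
qed

locale forward_backward =
  fixes B :: "'a::{real_inner,complete_space} \<Rightarrow> 'a set" and C :: "'a \<Rightarrow> 'a"
    and \<beta> \<sigma> \<gamma> \<eta> :: real
  assumes beta_nonneg: "0 \<le> \<beta>" and B_max: "max_beta_monotone \<beta> B" and C_cocoercive: "cocoercive \<sigma> C"
    and gamma_pos: "0 < \<gamma>" and gamma_less: "\<gamma> < 4 * \<sigma>"
    and eta_pos: "0 < \<eta>" and eta_less: "\<eta> < 2 - \<gamma> / (2 * \<sigma>)"
begin

definition J :: "'a \<Rightarrow> 'a" where "J z = resolvent (op_scale \<gamma> B) z"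

definition T :: "'a \<Rightarrow> 'a" where "T z = (1 - \<eta>) *\<^sub>R z + \<eta> *\<^sub>R J (z - \<gamma> *\<^sub>R C z)"

lemma sigma_pos: "0 < \<sigma>"
  using gamma_pos gamma_less by simp

lemma two_eta_sigma_less: "2 * \<eta> * \<sigma> < 4 * \<sigma> - \<gamma>"
proof -
  have "\<eta> * (2 * \<sigma>) < (2 - \<gamma> / (2 * \<sigma>)) * (2 * \<sigma>)"
    using eta_less sigma_pos by (intro mult_strict_right_mono) auto
  also have "\<dots> = 4 * \<sigma> - \<gamma>" using sigma_pos by (simp add: field_simps)
  finally show ?thesis by (simp add: mult_ac)
qed

lemma J_mem: "\<exists>u\<in>B (J z). z = J z + \<gamma> *\<^sub>R u"
  unfolding J_def by (rule resolvent_scaled_mem[OF beta_nonneg B_max gamma_pos])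

lemma J_eqI: "u \<in> B p \<Longrightarrow> z = p + \<gamma> *\<^sub>R u \<Longrightarrow> J z = p"
  unfolding J_def by (rule resolvent_scaled_eqI[OF beta_nonneg B_max gamma_pos])

lemma T_eq: "T z = z - \<eta> *\<^sub>R (z - J (z - \<gamma> *\<^sub>R C z))"
  unfolding T_def by (simp add: algebra_simps)

lemma T_ineq_beta:
  "(norm (T u - T v))^2 \<le> (norm (u - v))^2
     - ((4 * \<sigma> - \<gamma>) / (2 * \<eta> * \<sigma>) - 1) * (norm ((u - T u) - (v - T v)))^2
     - \<gamma> / (2 * \<eta> * \<sigma>) * (norm ((u - T u) - (v - T v) - (2 * \<eta> * \<sigma>) *\<^sub>R (C u - C v)))^2
     - 2 * \<eta> * \<gamma> * \<beta> * (norm (J (u - \<gamma> *\<^sub>R C u) - J (v - \<gamma> *\<^sub>R C v)))^2"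
proof -
  define p q where "p = J (u - \<gamma> *\<^sub>R C u)" and "q = J (v - \<gamma> *\<^sub>R C v)"
  obtain a b where a: "a \<in> B p" "u - \<gamma> *\<^sub>R C u = p + \<gamma> *\<^sub>R a"
    and b: "b \<in> B q" "v - \<gamma> *\<^sub>R C v = q + \<gamma> *\<^sub>R b"
    using J_mem unfolding p_def q_def by blast
  have "(u - v) - \<gamma> *\<^sub>R (C u - C v) - (p - q) = ((u - \<gamma> *\<^sub>R C u) - p) - ((v - \<gamma> *\<^sub>R C v) - q)"
    by (simp add: algebra_simps)
  also have "\<dots> = \<gamma> *\<^sub>R (a - b)" unfolding a(2) b(2) by (simp add: scaleR_diff_right)
  finally have "(u - v) - \<gamma> *\<^sub>R (C u - C v) - (p - q) = \<gamma> *\<^sub>R (a - b)" .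
  moreover have "\<beta> * (norm (p - q))^2 \<le> inner (p - q) (a - b)"
    using B_max a(1) b(1) unfolding max_beta_monotone_def beta_monotone_def by blast
  ultimately have "\<gamma> * \<beta> * (norm (p - q))^2 \<le> inner (p - q) ((u - v) - \<gamma> *\<^sub>R (C u - C v) - (p - q))"
    using gamma_pos by (simp add: mult.assoc)
  moreover have "\<sigma> * (norm (C u - C v))^2 \<le> inner (u - v) (C u - C v)"
    using C_cocoercive unfolding cocoercive_def by blast
  moreover have "T u - T v = (u - v) - \<eta> *\<^sub>R ((u - v) - (p - q))"
    "(u - T u) - (v - T v) = \<eta> *\<^sub>R ((u - v) - (p - q))"
    unfolding T_eq p_def q_def by (simp_all add: algebra_simps)
  ultimately show ?thesis
    using forward_backward_step_ineq[OF _ _ sigma_pos eta_pos gamma_pos] unfolding p_def q_def by simp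
qed

lemma T_ineq:
  "(norm (T u - T v))^2 \<le> (norm (u - v))^2
     - ((4 * \<sigma> - \<gamma>) / (2 * \<eta> * \<sigma>) - 1) * (norm ((u - T u) - (v - T v)))^2
     - \<gamma> / (2 * \<eta> * \<sigma>) * (norm ((u - T u) - (v - T v) - (2 * \<eta> * \<sigma>) *\<^sub>R (C u - C v)))^2"
proof -
  have "0 \<le> 2 * \<eta> * \<gamma> * \<beta> * (norm (J (u - \<gamma> *\<^sub>R C u) - J (v - \<gamma> *\<^sub>R C v)))^2"
    using beta_nonneg eta_pos gamma_pos by simp
  then show ?thesis using T_ineq_beta[of u v] by linarith
qed

lemma T_averaged: "averaged (2 * \<eta> * \<sigma> / (4 * \<sigma> - \<gamma>)) T"
proof (rule averagedI)
  show "0 < 2 * \<eta> * \<sigma> / (4 * \<sigma> - \<gamma>)"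
    using eta_pos sigma_pos gamma_less by (intro divide_pos_pos) auto
  show "2 * \<eta> * \<sigma> / (4 * \<sigma> - \<gamma>) < 1"
    using two_eta_sigma_less gamma_less by (simp add: divide_less_eq)
  have inverse: "1 / (2 * \<eta> * \<sigma> / (4 * \<sigma> - \<gamma>)) = (4 * \<sigma> - \<gamma>) / (2 * \<eta> * \<sigma>)" by simp
  show "(norm (T u - T v))^2 \<le> (norm (u - v))^2
      - (1 / (2 * \<eta> * \<sigma> / (4 * \<sigma> - \<gamma>)) - 1) * (norm ((u - T u) - (v - T v)))^2" for u v
  proof -
    have "0 \<le> \<gamma> / (2 * \<eta> * \<sigma>) * (norm ((u - T u) - (v - T v) - (2 * \<eta> * \<sigma>) *\<^sub>R (C u - C v)))^2"
      using gamma_pos eta_pos sigma_pos by simp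
    then show ?thesis unfolding inverse using T_ineq[of u v] by linarith
  qed
qed

lemma T_nonexpansive: "nonexpansive T"
  using T_averaged by (rule averaged_imp_nonexpansive)

lemma J_fixed: "T p = p \<Longrightarrow> J (p - \<gamma> *\<^sub>R C p) = p"
  using eta_pos T_eq[of p] by simp

lemma zer_iff_fixed: "p \<in> zer (op_sum B C) \<longleftrightarrow> T p = p"
proof
  assume "p \<in> zer (op_sum B C)"
  then have "- C p \<in> B p" unfolding zer_def op_sum_def by (auto simp: add_eq_0_iff)
  then have "J (p - \<gamma> *\<^sub>R C p) = p" by (intro J_eqI[of "- C p"]) auto
  then show "T p = p" using T_eq[of p] by simp
next
  assume "T p = p"
  then have J: "J (p - \<gamma> *\<^sub>R C p) = p" by (rule J_fixed)
  obtain u where "u \<in> B p" "p - \<gamma> *\<^sub>R C p = p + \<gamma> *\<^sub>R u"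
    using J_mem[of "p - \<gamma> *\<^sub>R C p"] unfolding J by blast
  then have "\<gamma> *\<^sub>R (u + C p) = 0" "u \<in> B p" by (simp_all add: algebra_simps)
  then have "u = - C p" "u \<in> B p" using gamma_pos by (simp_all add: eq_neg_iff_add_eq_0)
  then show "p \<in> zer (op_sum B C)" unfolding zer_def op_sum_def by force
qed

lemma fixed_points_ineq:
  assumes "T y = y" "T y' = y'"
  shows "\<gamma> / (2 * \<eta> * \<sigma>) * (norm ((2 * \<eta> * \<sigma>) *\<^sub>R (C y - C y')))^2
      + 2 * \<eta> * \<gamma> * \<beta> * (norm (y - y'))^2 \<le> 0"
  using T_ineq_beta[of y y'] unfolding assms J_fixed[OF assms(1)] J_fixed[OF assms(2)]
  by (simp add: norm_minus_commute)

lemma fixed_points_C_eq: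
  assumes "T y = y" "T y' = y'"
  shows "C y = C y'"
proof -
  have "0 \<le> 2 * \<eta> * \<gamma> * \<beta> * (norm (y - y'))^2" using eta_pos gamma_pos beta_nonneg by simp
  then have "\<gamma> / (2 * \<eta> * \<sigma>) * (norm ((2 * \<eta> * \<sigma>) *\<^sub>R (C y - C y')))^2 \<le> 0"
    using fixed_points_ineq[OF assms] by linarith
  moreover have "0 < \<gamma> / (2 * \<eta> * \<sigma>)" using gamma_pos eta_pos sigma_pos by simp
  ultimately have "(norm ((2 * \<eta> * \<sigma>) *\<^sub>R (C y - C y')))^2 \<le> 0"
    by (meson not_le mult_pos_pos)
  then show ?thesis using eta_pos sigma_pos by simp
qed

lemma C_image_zer:
  assumes "T p = p"
  shows "C ` zer (op_sum B C) = {C p}"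
proof -
  have "C y = C p" if "y \<in> zer (op_sum B C)" for y
    using fixed_points_C_eq[OF _ assms] that unfolding zer_iff_fixed by blast
  moreover have "p \<in> zer (op_sum B C)" using assms unfolding zer_iff_fixed .
  ultimately show ?thesis by blast
qed

lemma fixed_points_eq:
  assumes "0 < \<beta>" "T y = y" "T y' = y'"
  shows "y = y'"
proof -
  have "0 \<le> \<gamma> / (2 * \<eta> * \<sigma>) * (norm ((2 * \<eta> * \<sigma>) *\<^sub>R (C y - C y')))^2"
    using gamma_pos eta_pos sigma_pos by simp
  then have "2 * \<eta> * \<gamma> * \<beta> * (norm (y - y'))^2 \<le> 0"
    using fixed_points_ineq[OF assms(2,3)] by linarith
  moreover have "0 < 2 * \<eta> * \<gamma> * \<beta>" using \<open>0 < \<beta>\<close> gamma_pos eta_pos by simp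
  ultimately have "(norm (y - y'))^2 \<le> 0" by (meson not_le mult_pos_pos)
  then show ?thesis by simp
qed

context
  fixes x :: "nat \<Rightarrow> 'a"
  assumes x_Suc: "\<And>n. x (Suc n) = T (x n)"
begin

lemma residual_antimono: "norm (x (Suc n) - T (x (Suc n))) \<le> norm (x n - T (x n))"
  using T_nonexpansive unfolding nonexpansive_def x_Suc by simp

lemma iterates_summable:
  assumes "T p = p"
  shows "summable (\<lambda>n. (norm (x n - T (x n)))^2)"
    and "summable (\<lambda>n. (norm ((x n - T (x n)) - (2 * \<eta> * \<sigma>) *\<^sub>R (C (x n) - C p)))^2)"
    and "summable (\<lambda>n. \<beta> * (norm (J (x n - \<gamma> *\<^sub>R C (x n)) - p))^2)"
proof -
  define \<rho> where "\<rho> = (4 * \<sigma> - \<gamma>) / (2 * \<eta> * \<sigma>) - 1"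
  define \<tau> where "\<tau> = \<gamma> / (2 * \<eta> * \<sigma>)"
  define a t1 t2 t3 where "a n = (norm (x n - p))^2"
    and "t1 n = (norm (x n - T (x n)))^2"
    and "t2 n = (norm ((x n - T (x n)) - (2 * \<eta> * \<sigma>) *\<^sub>R (C (x n) - C p)))^2"
    and "t3 n = \<beta> * (norm (J (x n - \<gamma> *\<^sub>R C (x n)) - p))^2" for n
  have descent: "a (Suc n) + \<rho> * t1 n + \<tau> * t2 n + (2 * \<eta> * \<gamma>) * t3 n \<le> a n" for n
    using T_ineq_beta[of "x n" p]
    unfolding a_def t1_def t2_def t3_def \<rho>_def \<tau>_def x_Suc[symmetric] assms J_fixed[OF assms]
    by (simp add: algebra_simps)
  have "0 < \<rho>" unfolding \<rho>_def using two_eta_sigma_less eta_pos sigma_pos by (simp add: field_simps)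
  moreover have "0 < \<tau>" "0 < 2 * \<eta> * \<gamma>" unfolding \<tau>_def using gamma_pos eta_pos sigma_pos by auto
  moreover have "0 \<le> t1 n" "0 \<le> t2 n" "0 \<le> t3 n" for n
    unfolding t1_def t2_def t3_def using beta_nonneg by auto
  ultimately have nonneg: "0 \<le> \<rho> * t1 n" "0 \<le> \<tau> * t2 n" "0 \<le> (2 * \<eta> * \<gamma>) * t3 n" for n
    by simp_all
  have "summable t1"
  proof (rule summable_if_descent[of a t1 \<rho>])
    show "a (Suc n) + \<rho> * t1 n \<le> a n" for n using descent[of n] nonneg(2,3)[of n] by linarith
  qed (use \<open>0 < \<rho>\<close> in \<open>auto simp: a_def t1_def\<close>)
  moreover have "summable t2"
  proof (rule summable_if_descent[of a t2 \<tau>])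
    show "a (Suc n) + \<tau> * t2 n \<le> a n" for n using descent[of n] nonneg(1,3)[of n] by linarith
  qed (use \<open>0 < \<tau>\<close> in \<open>auto simp: a_def t2_def\<close>)
  moreover have "summable t3"
  proof (rule summable_if_descent[of a t3 "2 * \<eta> * \<gamma>"])
    show "a (Suc n) + (2 * \<eta> * \<gamma>) * t3 n \<le> a n" for n using descent[of n] nonneg(1,2)[of n] by linarith
  qed (use \<open>0 < 2 * \<eta> * \<gamma>\<close> beta_nonneg in \<open>auto simp: a_def t3_def\<close>)
  ultimately show "summable (\<lambda>n. (norm (x n - T (x n)))^2)"
    and "summable (\<lambda>n. (norm ((x n - T (x n)) - (2 * \<eta> * \<sigma>) *\<^sub>R (C (x n) - C p)))^2)"
    and "summable (\<lambda>n. \<beta> * (norm (J (x n - \<gamma> *\<^sub>R C (x n)) - p))^2)"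
    unfolding t1_def t2_def t3_def by simp_all
qed

lemma residual_smallo:
  assumes "T p = p"
  shows "(\<lambda>n. norm (x n - T (x n))) \<in> o(\<lambda>n. 1 / sqrt (real n))"
  by (rule antimono_summable_power2_smallo[OF norm_ge_zero residual_antimono iterates_summable(1)[OF assms]])

lemma residual_LIMSEQ:
  assumes "T p = p"
  shows "(\<lambda>n. x n - T (x n)) \<longlonglongrightarrow> 0"
  using iterates_summable(1)[OF assms] by (rule summable_power2_norm_imp_LIMSEQ_zero)

lemma iterates_weakly_converge:
  assumes "T p = p"
  shows "\<exists>q. T q = q \<and> weakly_converges x q"
  using T_nonexpansive x_Suc assms residual_LIMSEQ[OF assms] by (rule fejer_weakly_converges)

lemma C_iterates_LIMSEQ:
  assumes "T p = p"
  shows "(\<lambda>n. C (x n)) \<longlonglongrightarrow> C p"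
proof -
  have "(\<lambda>n. (x n - T (x n)) - (2 * \<eta> * \<sigma>) *\<^sub>R (C (x n) - C p)) \<longlonglongrightarrow> 0"
    using iterates_summable(2)[OF assms] by (rule summable_power2_norm_imp_LIMSEQ_zero)
  with residual_LIMSEQ[OF assms]
  have "(\<lambda>n. (1 / (2 * \<eta> * \<sigma>)) *\<^sub>R ((x n - T (x n))
      - ((x n - T (x n)) - (2 * \<eta> * \<sigma>) *\<^sub>R (C (x n) - C p)))) \<longlonglongrightarrow> (1 / (2 * \<eta> * \<sigma>)) *\<^sub>R (0 - 0)"
    by (intro tendsto_intros)
  then have "(\<lambda>n. C (x n) - C p) \<longlonglongrightarrow> 0" using eta_pos sigma_pos by simp
  then show ?thesis by (simp add: LIM_zero_iff)
qed

lemma iterates_LIMSEQ: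
  assumes "0 < \<beta>" "T p = p"
  shows "x \<longlonglongrightarrow> p"
proof -
  have "(\<lambda>n. sqrt \<beta> *\<^sub>R (J (x n - \<gamma> *\<^sub>R C (x n)) - p)) \<longlonglongrightarrow> 0"
    using iterates_summable(3)[OF assms(2)] assms(1)
    by (intro summable_power2_norm_imp_LIMSEQ_zero) (simp add: power_mult_distrib)
  then have "(\<lambda>n. (1 / sqrt \<beta>) *\<^sub>R (sqrt \<beta> *\<^sub>R (J (x n - \<gamma> *\<^sub>R C (x n)) - p))) \<longlonglongrightarrow> (1 / sqrt \<beta>) *\<^sub>R 0"
    by (intro tendsto_intros)
  then have J_lim: "(\<lambda>n. J (x n - \<gamma> *\<^sub>R C (x n)) - p) \<longlonglongrightarrow> 0" using assms(1) by simp
  have "(\<lambda>n. (1 / \<eta>) *\<^sub>R (x n - T (x n))) \<longlonglongrightarrow> (1 / \<eta>) *\<^sub>R 0"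
    by (intro tendsto_intros residual_LIMSEQ[OF assms(2)])
  moreover have "(1 / \<eta>) *\<^sub>R (x n - T (x n)) = x n - J (x n - \<gamma> *\<^sub>R C (x n))" for n
    using eta_pos T_eq[of "x n"] by simp
  ultimately have "(\<lambda>n. (x n - J (x n - \<gamma> *\<^sub>R C (x n))) + (J (x n - \<gamma> *\<^sub>R C (x n)) - p)) \<longlonglongrightarrow> 0 + 0"
    using J_lim by (intro tendsto_add) simp_all
  then show ?thesis by (simp add: LIM_zero_iff)
qed

lemma iterates_convergence:
  "zer (op_sum B C) \<noteq> {} \<longrightarrow> (\<lambda>n. norm (x n - T (x n))) \<in> o(\<lambda>n. 1 / sqrt (real n))
    \<and> (\<exists>xs \<in> zer (op_sum B C). weakly_converges x xs \<and> (\<lambda>n. C (x n)) \<longlonglongrightarrow> C xs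
        \<and> C ` zer (op_sum B C) = {C xs} \<and> (0 < \<beta> \<longrightarrow> x \<longlonglongrightarrow> xs \<and> zer (op_sum B C) = {xs}))"
  (is "_ \<longrightarrow> ?convergence")
proof
  assume "zer (op_sum B C) \<noteq> {}"
  then obtain p where "T p = p" using zer_iff_fixed by blast
  then obtain xs where xs: "T xs = xs" "weakly_converges x xs"
    using iterates_weakly_converge by blast
  show ?convergence
  proof (intro conjI bexI[where x = xs] impI)
    show "(\<lambda>n. norm (x n - T (x n))) \<in> o(\<lambda>n. 1 / sqrt (real n))"
      using residual_smallo[OF \<open>T p = p\<close>] .
    show xs_zer: "xs \<in> zer (op_sum B C)" unfolding zer_iff_fixed by (rule xs(1))
    show "weakly_converges x xs" by (rule xs(2))
    show "(\<lambda>n. C (x n)) \<longlonglongrightarrow> C xs" using C_iterates_LIMSEQ[OF xs(1)] .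
    show "C ` zer (op_sum B C) = {C xs}" using C_image_zer[OF xs(1)] .
    show "x \<longlonglongrightarrow> xs" if "0 < \<beta>" using iterates_LIMSEQ[OF that xs(1)] .
    show "zer (op_sum B C) = {xs}" if "0 < \<beta>"
    proof -
      have "y = xs" if "y \<in> zer (op_sum B C)" for y
        using fixed_points_eq[OF \<open>0 < \<beta>\<close> _ xs(1)] that unfolding zer_iff_fixed .
      then show ?thesis using xs_zer by blast
    qed
  qed
qed

end

end

theorem theorem5p1:
  fixes B :: "'a::{real_inner, complete_space} \<Rightarrow> 'a set"
    and C :: "'a \<Rightarrow> 'a" and T :: "'a \<Rightarrow> 'a" and x :: "nat \<Rightarrow> 'a"
    and \<beta> \<sigma> \<gamma> \<eta> :: real and x0 :: 'a
  assumes "\<beta> \<ge> 0" and "max_beta_monotone \<beta> B" and "cocoercive \<sigma> C"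
    and "0 < \<gamma>" and "\<gamma> < 4 * \<sigma>"
    and "0 < \<eta>" and "\<eta> < 2 - \<gamma> / (2 * \<sigma>)"
    and T_def: "\<And>z. T z = (1 - \<eta>) *\<^sub>R z + \<eta> *\<^sub>R resolvent (op_scale \<gamma> B) (z - \<gamma> *\<^sub>R C z)"
    and "x 0 = x0" and "\<And>n. x (Suc n) = T (x n)"
  shows "(\<forall>u v. (norm (T u - T v))^2 \<le> (norm (u - v))^2
            - ((4 * \<sigma> - \<gamma>) / (2 * \<eta> * \<sigma>) - 1) * (norm ((u - T u) - (v - T v)))^2
            - \<gamma> / (2 * \<eta> * \<sigma>) * (norm ((u - T u) - (v - T v) - (2 * \<eta> * \<sigma>) *\<^sub>R (C u - C v)))^2)
       \<and> averaged (2 * \<eta> * \<sigma> / (4 * \<sigma> - \<gamma>)) T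
       \<and> (zer (op_sum B C) \<noteq> {} \<longrightarrow>
            (\<lambda>n. norm (x n - T (x n))) \<in> o(\<lambda>n. 1 / sqrt (real n))
          \<and> (\<exists>xs \<in> zer (op_sum B C).
               weakly_converges x xs
             \<and> (\<lambda>n. C (x n)) \<longlonglongrightarrow> C xs
             \<and> C ` zer (op_sum B C) = {C xs}
             \<and> (\<beta> > 0 \<longrightarrow> x \<longlonglongrightarrow> xs \<and> zer (op_sum B C) = {xs})))"
proof -
  interpret fb: forward_backward B C \<beta> \<sigma> \<gamma> \<eta>
    using assms(1-7) by unfold_locales auto
  have T_eq: "T = fb.T" by (auto simp: T_def fb.T_def fb.J_def)
  have x_Suc: "x (Suc n) = fb.T (x n)" for n using assms(10) unfolding T_eq .
  show ?thesis unfolding T_eq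
    by (intro conjI allI fb.T_ineq fb.T_averaged fb.iterates_convergence[of x, OF x_Suc])
qed

end
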